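(* Let $n,m\in\mathbb N$, $d:=\min\{n,m\}$, and $k\in\{1,\dots,d\}$. (i) For nonzero positive semidefinite $\rho\in\mathbb M_n\otimes\mathbb M_m$: $\rho\in\mathsf K_k\iff\mathrm{FSN}(\rho)\le k$. Consequently $\min\{\ell\in\{1,\dots,d\}:\rho\in\mathsf K_\ell\}=\lceil\mathrm{FSN}(\rho)\rceil$. (ii) For a Hermitian-preserving map $\Phi:\mathbb M_n\to\mathbb M_m$ with $\Phi\in\mathsf P_1$: $\Phi\in\mathsf P_k\iff\tau(\Phi)\ge k$.
   Context: For $\psi=\sum_{i,j}a_{ij}e_i\otimes f_j\in\mathbb C^n\otimes\mathbb C^m$, its Schmidt coefficients $s_1(\psi)\ge\dots\ge s_d(\psi)\ge0$ are the singular values of $[a_{ij}]$. For $\alpha\in[1,d]$ with $k'=\lfloor\alpha\rfloor$, $\theta=\alpha-k'$, $r=\lceil\alpha\rceil$, a unit vector $\psi$ is $\alpha$-admissible if $s_j(\psi)=0$ for $j\ge r+1$ and, when $\theta>0$, $s_{k'+1}(\psi)\le\frac\theta{k'}\sum_{j=1}^{k'}s_j(\psi)$; $\mathcal V_\alpha$ is the set of these. $\mathsf K_\alpha$ is the closure of the convex cone generated by $\{\psi\psi^\ast:\psi\in\mathcal V_\alpha\}$. The Choi matrix is $C_\Phi=\sum_{i,j}E_{ij}\otimes\Phi(E_{ij})$, and a Hermitian-preserving $\Phi$ is in $\mathsf P_\alpha$ if $\langle\psi,C_\Phi\psi\rangle\ge0$ for all $\psi\in\mathcal V_\alpha$. $\mathrm{FSN}(\rho):=\inf\{\alpha\in[1,d]:\rho\in\mathsf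 K_\alpha\}$ for nonzero positive semidefinite $\rho$, and $\tau(\Phi):=\sup\{\alpha\in[1,d]:\Phi\in\mathsf P_\alpha\}$ for Hermitian-preserving $\Phi\in\mathsf P_1$. *)

theory Defs
  imports "Jordan_Normal_Form.Char_Poly"
begin

text \<open>The space C^n (x) C^m is represented by complex vectors of dimension n*m,
  the basis vector e_i (x) f_j (i < n, j < m) having index i*m + j (Kronecker convention).\<close>

definition cadj :: "complex mat \<Rightarrow> complex mat" where
  "cadj A = mat (dim_col A) (dim_row A) (\<lambda>(i,j). cnj (A $$ (j,i)))"

definition coeff_mat :: "nat \<Rightarrow> nat \<Rightarrow> complex vec \<Rightarrow> complex mat" where
  "coeff_mat n m \<psi> = mat n m (\<lambda>(i,j). \<psi> $ (i * m + j))"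

text \<open>The list has length n; the first min n m entries
  are the singular values s_1 >= ... >= s_d (the remaining ones are zero).\<close>
definition sing_vals :: "complex mat \<Rightarrow> real list" where
  "sing_vals A = (SOME s. length s = dim_row A \<and> sorted_wrt (\<ge>) s \<and> (\<forall>x\<in>set s. 0 \<le> x) \<and>
      char_poly (A * cadj A) = (\<Prod>x\<leftarrow>s. [:- complex_of_real (x\<^sup>2), 1:]))"

definition schmidt :: "nat \<Rightarrow> nat \<Rightarrow> complex vec \<Rightarrow> nat \<Rightarrow> real" where
  "schmidt n m \<psi> j = sing_vals (coeff_mat n m \<psi>) ! (j - 1)"

definition unit_vec :: "nat \<Rightarrow> complex vec \<Rightarrow> bool" where
  "unit_vec N \<psi> \<longleftrightarrow> \<psi> \<in> carrier_vec N \<and> (\<Sum>x<N. (cmod (\<psi> $ x))\<^sup>2) = 1"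

definition admissible :: "nat \<Rightarrow> nat \<Rightarrow> real \<Rightarrow> complex vec set" where
  "admissible n m \<alpha> = {\<psi>. unit_vec (n * m) \<psi> \<and>
     (let k' = nat \<lfloor>\<alpha>\<rfloor>; \<theta> = \<alpha> - real k'; r = nat \<lceil>\<alpha>\<rceil> in
       (\<forall>j. r + 1 \<le> j \<and> j \<le> min n m \<longrightarrow> schmidt n m \<psi> j = 0) \<and>
       (\<theta> > 0 \<longrightarrow> schmidt n m \<psi> (k' + 1) \<le> \<theta> / real k' * (\<Sum>j=1..k'. schmidt n m \<psi> j)))}"

definition outer :: "complex vec \<Rightarrow> complex mat" where
  "outer \<psi> = mat (dim_vec \<psi>) (dim_vec \<psi>) (\<lambda>(x,y). \<psi> $ x * cnj (\<psi> $ y))"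

definition cone_gen :: "nat \<Rightarrow> nat \<Rightarrow> real \<Rightarrow> complex mat set" where
  "cone_gen n m \<alpha> = {\<rho>. \<exists>(N::nat) (c::nat \<Rightarrow> real) (\<psi>::nat \<Rightarrow> complex vec).
      (\<forall>i<N. 0 \<le> c i \<and> \<psi> i \<in> admissible n m \<alpha>) \<and>
      \<rho> = mat (n * m) (n * m) (\<lambda>(x,y). \<Sum>i<N. complex_of_real (c i) * outer (\<psi> i) $$ (x,y))}"

text \<open>Topological closure in the space of (n*m) x (n*m) complex matrices (any norm; we use
  the entrywise maximum modulus).\<close>
definition mat_closure :: "nat \<Rightarrow> complex mat set \<Rightarrow> complex mat set" where
  "mat_closure N S = {\<rho>. \<rho> \<in> carrier_mat N N \<and>
      (\<forall>\<epsilon>>0. \<exists>\<sigma>\<in>S. \<forall>x<N. \<forall>y<N. cmod (\<rho> $$ (x,y) - \<sigma> $$ (x,y)) < \<epsilon>)}"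

definition K_cone :: "nat \<Rightarrow> nat \<Rightarrow> real \<Rightarrow> complex mat set" where
  "K_cone n m \<alpha> = mat_closure (n * m) (cone_gen n m \<alpha>)"

definition qform :: "complex mat \<Rightarrow> complex vec \<Rightarrow> complex" where
  "qform C \<psi> = (\<Sum>x<dim_vec \<psi>. \<Sum>y<dim_vec \<psi>. cnj (\<psi> $ x) * C $$ (x,y) * \<psi> $ y)"

definition nonneg_real :: "complex \<Rightarrow> bool" where
  "nonneg_real z \<longleftrightarrow> Im z = 0 \<and> 0 \<le> Re z"

definition psd :: "nat \<Rightarrow> complex mat \<Rightarrow> bool" where
  "psd N \<rho> \<longleftrightarrow> \<rho> \<in> carrier_mat N N \<and> (\<forall>v\<in>carrier_vec N. nonneg_real (qform \<rho> v))"

definition FSN :: "nat \<Rightarrow> nat \<Rightarrow> complex mat \<Rightarrow> real" where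
  "FSN n m \<rho> = Inf {\<alpha>. 1 \<le> \<alpha> \<and> \<alpha> \<le> real (min n m) \<and> \<rho> \<in> K_cone n m \<alpha>}"

definition mat_unit :: "nat \<Rightarrow> nat \<Rightarrow> nat \<Rightarrow> complex mat" where
  "mat_unit n i j = mat n n (\<lambda>(a,b). if a = i \<and> b = j then 1 else 0)"

text \<open>Choi matrix C_Phi = sum_{i,j} E_ij (x) Phi(E_ij).\<close>
definition choi :: "nat \<Rightarrow> nat \<Rightarrow> (complex mat \<Rightarrow> complex mat) \<Rightarrow> complex mat" where
  "choi n m \<Phi> = mat (n * m) (n * m)
     (\<lambda>(x,y). \<Phi> (mat_unit n (x div m) (y div m)) $$ (x mod m, y mod m))"

definition herm_pres :: "nat \<Rightarrow> nat \<Rightarrow> (complex mat \<Rightarrow> complex mat) \<Rightarrow> bool" where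
  "herm_pres n m \<Phi> \<longleftrightarrow>
     (\<forall>A\<in>carrier_mat n n. \<Phi> A \<in> carrier_mat m m) \<and>
     (\<forall>A\<in>carrier_mat n n. \<forall>B\<in>carrier_mat n n. \<Phi> (A + B) = \<Phi> A + \<Phi> B) \<and>
     (\<forall>A\<in>carrier_mat n n. \<forall>c::complex. \<Phi> (c \<cdot>\<^sub>m A) = c \<cdot>\<^sub>m \<Phi> A) \<and>
     (\<forall>A\<in>carrier_mat n n. \<Phi> (cadj A) = cadj (\<Phi> A))"

definition P_set :: "nat \<Rightarrow> nat \<Rightarrow> real \<Rightarrow> (complex mat \<Rightarrow> complex mat) set" where
  "P_set n m \<alpha> = {\<Phi>. herm_pres n m \<Phi> \<and>
      (\<forall>\<psi>\<in>admissible n m \<alpha>. nonneg_real (qform (choi n m \<Phi>) \<psi>))}"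

definition tau :: "nat \<Rightarrow> nat \<Rightarrow> (complex mat \<Rightarrow> complex mat) \<Rightarrow> real" where
  "tau n m \<Phi> = Sup {\<alpha>. 1 \<le> \<alpha> \<and> \<alpha> \<le> real (min n m) \<and> \<Phi> \<in> P_set n m \<alpha>}"

end

theory Submission
  imports Defs "Jordan_Normal_Form.Schur_Decomposition" "Berlekamp_Zassenhaus.Mahler_Measure"
begin

(* The sets V_alpha grow with alpha, so K_alpha grows and P_alpha shrinks, and the spectral
   theorem puts every positive semidefinite matrix into K_d. Both equivalences therefore reduce
   to a one-sided continuity in alpha at each integer k.

   Cones: a (k + theta)-admissible unit vector has its (k+1)-st Schmidt coefficient at most theta;
   deleting it and renormalising gives a k-admissible vector that is 2 theta-close entrywise. The
   elements of the generated cone that approximate rho have bounded trace, so the error of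
   truncating all their generators is O(theta), and rho in K_(k+theta) for all theta > 0 forces
   rho in K_k.

   Maps: multiplying the first k-1 Schmidt coefficients of a k-admissible psi by 1 + t and
   renormalising gives a (k - 1 + 1/(1+t))-admissible vector. Up to a positive factor, the
   quadratic form of the Choi matrix on it is a quadratic polynomial in t, whose value at t = 0
   is <psi, C psi>; letting t tend to 0 gives positivity at k.

   Schmidt coefficients are controlled through a spectral decomposition A A* = U diag(e) U* of
   the coefficient matrix A of psi: they are the square roots of the e_i, and replacing A by
   U diag(c) U* A turns them into c_i sqrt(e_i) as long as these stay decreasing. *)

section \<open>Conjugate transpose, unitary and real diagonal matrices\<close>

lemma index_mult_mat_sum:
  assumes "i < dim_row A" "j < dim_col B" "dim_col A = dim_row B"
  shows "(A * B) $$ (i,j) = (\<Sum>k<dim_row B. A $$ (i,k) * B $$ (k,j))"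
  using assms by (simp add: scalar_prod_def atLeast0LessThan)

lemma dim_cadj [simp]: "dim_row (cadj A) = dim_col A" "dim_col (cadj A) = dim_row A"
  by (auto simp: cadj_def)

lemma cadj_carrier [simp]: "A \<in> carrier_mat r c \<Longrightarrow> cadj A \<in> carrier_mat c r"
  by (auto simp: cadj_def)

lemma index_cadj [simp]: "i < dim_col A \<Longrightarrow> j < dim_row A \<Longrightarrow> cadj A $$ (i,j) = cnj (A $$ (j,i))"
  by (auto simp: cadj_def)

lemma cadj_cadj [simp]: "cadj (cadj A) = A"
  by (rule eq_matI) auto

lemma cadj_one [simp]: "cadj (1\<^sub>m n) = 1\<^sub>m n"
  by (rule eq_matI) auto

lemma cadj_mult:
  assumes "A \<in> carrier_mat r c" "B \<in> carrier_mat c d"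
  shows "cadj (A * B) = cadj B * cadj A"
  using assms
  by (intro eq_matI) (auto simp del: index_mult_mat(1) simp: index_mult_mat_sum mult.commute)

lemma cadj_mult_hermitian:
  assumes "A \<in> carrier_mat r c"
  shows "cadj (A * cadj A) = A * cadj A"
  using cadj_mult[OF assms cadj_carrier[OF assms]] by simp

lemma cscalar_prod_mult_mat_vec:
  assumes "A \<in> carrier_mat r c" "v \<in> carrier_vec c" "w \<in> carrier_vec r"
  shows "(A *\<^sub>v v) \<bullet>c w = v \<bullet>c (cadj A *\<^sub>v w)"
proof -
  have "(A *\<^sub>v v) \<bullet>c w = (\<Sum>i<r. \<Sum>j<c. A $$ (i,j) * v $ j * cnj (w $ i))"
    using assms by (simp add: scalar_prod_def atLeast0LessThan sum_distrib_right mult.assoc)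
  also have "\<dots> = (\<Sum>j<c. \<Sum>i<r. v $ j * cnj (cnj (A $$ (i,j)) * w $ i))"
    by (subst sum.swap) (simp add: mult.commute mult.left_commute)
  also have "\<dots> = v \<bullet>c (cadj A *\<^sub>v w)"
    using assms by (simp add: scalar_prod_def atLeast0LessThan sum_distrib_left)
  finally show ?thesis .
qed

definition unitary :: "nat \<Rightarrow> complex mat \<Rightarrow> bool" where
  "unitary N U \<longleftrightarrow> U \<in> carrier_mat N N \<and> cadj U * U = 1\<^sub>m N \<and> U * cadj U = 1\<^sub>m N"

lemma unitaryI:
  assumes "U \<in> carrier_mat N N" "cadj U * U = 1\<^sub>m N"
  shows "unitary N U"
  using assms mat_mult_left_right_inverse[OF cadj_carrier[OF assms(1)] assms(1)]
  by (simp add: unitary_def)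

lemma unitary_carrier: "unitary N U \<Longrightarrow> U \<in> carrier_mat N N"
  by (simp add: unitary_def)

lemma unitary_mult:
  assumes U: "unitary N U" and V: "unitary N V"
  shows "unitary N (U * V)"
proof (rule unitaryI)
  have UV: "U \<in> carrier_mat N N" "V \<in> carrier_mat N N" "cadj U * U = 1\<^sub>m N" "cadj V * V = 1\<^sub>m N"
    using U V by (auto simp: unitary_def)
  have "cadj (U * V) * (U * V) = cadj V * ((cadj U * U) * V)"
    using UV(1,2) by (simp add: cadj_mult[of _ N N] assoc_mult_mat[of _ N N _ N _ N])
  then show "cadj (U * V) * (U * V) = 1\<^sub>m N"
    using UV by simp
qed (use U V in \<open>auto simp: unitary_def\<close>)

definition real_diag_mat :: "nat \<Rightarrow> (nat \<Rightarrow> real) \<Rightarrow> complex mat" where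
  "real_diag_mat N e = mat N N (\<lambda>(i,j). if i = j then complex_of_real (e i) else 0)"

lemma real_diag_mat_carrier [simp]:
  "real_diag_mat N e \<in> carrier_mat N N" "dim_row (real_diag_mat N e) = N" "dim_col (real_diag_mat N e) = N"
  by (auto simp: real_diag_mat_def)

lemma index_real_diag_mat [simp]:
  "i < N \<Longrightarrow> j < N \<Longrightarrow> real_diag_mat N e $$ (i,j) = (if i = j then complex_of_real (e i) else 0)"
  by (simp add: real_diag_mat_def)

lemma cadj_real_diag_mat [simp]: "cadj (real_diag_mat N e) = real_diag_mat N e"
  by (rule eq_matI) auto

lemma real_diag_mat_one: "real_diag_mat N (\<lambda>_. 1) = 1\<^sub>m N"
  by (rule eq_matI) auto

lemma index_mult_real_diag_mat:
  assumes "dim_col X = N" "i < dim_row X" "k < N"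
  shows "(X * real_diag_mat N e) $$ (i,k) = X $$ (i,k) * complex_of_real (e k)"
proof -
  have "(X * real_diag_mat N e) $$ (i,k) = (\<Sum>l<N. X $$ (i,l) * real_diag_mat N e $$ (l,k))"
    using assms by (simp del: index_mult_mat(1) add: index_mult_mat_sum)
  also have "\<dots> = (\<Sum>l\<in>{k}. X $$ (i,l) * real_diag_mat N e $$ (l,k))"
    using assms by (intro sum.mono_neutral_right) auto
  finally show ?thesis
    using assms by simp
qed

lemma real_diag_mat_mult: "real_diag_mat N a * real_diag_mat N b = real_diag_mat N (\<lambda>i. a i * b i)"
  by (rule eq_matI) (auto simp del: index_mult_mat(1) simp: index_mult_real_diag_mat)

lemma index_real_diag_conj:
  assumes X: "X \<in> carrier_mat r N" and ij: "i < r" "j < r"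
  shows "(X * real_diag_mat N e * cadj X) $$ (i,j) =
    (\<Sum>k<N. X $$ (i,k) * complex_of_real (e k) * cnj (X $$ (j,k)))"
  using assms
  by (subst index_mult_mat_sum) (auto simp del: index_mult_mat(1) simp: index_mult_real_diag_mat)

lemma hermitian_real_diag_conj:
  assumes "U \<in> carrier_mat n n"
  shows "cadj (U * real_diag_mat n c * cadj U) = U * real_diag_mat n c * cadj U"
proof -
  have "cadj (U * real_diag_mat n c * cadj U) = U * (real_diag_mat n c * cadj U)"
    using assms
    by (simp add: cadj_mult[of "U * real_diag_mat n c" n n "cadj U" n] cadj_mult[of U n n _ n])
  then show ?thesis
    using assms by (simp add: assoc_mult_mat[of _ n n _ n _ n])
qed

lemma unitary_cancel:
  assumes "unitary N U" "X \<in> carrier_mat N k"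
  shows "U * (cadj U * X) = X" "cadj U * (U * X) = X"
proof -
  have "U \<in> carrier_mat N N" "cadj U * U = 1\<^sub>m N" "U * cadj U = 1\<^sub>m N"
    using assms(1) by (auto simp: unitary_def)
  then show "U * (cadj U * X) = X" "cadj U * (U * X) = X"
    using assms(2)
    by (simp_all add: assoc_mult_mat[symmetric, of U N N "cadj U" N X k]
        assoc_mult_mat[symmetric, of "cadj U" N N U N X k])
qed

lemma eigenvalue_unitary_diag:
  assumes U: "unitary N U" and H: "H = U * real_diag_mat N e * cadj U" and i: "i < N"
  shows "eigenvalue H (complex_of_real (e i))"
proof -
  have Uc: "U \<in> carrier_mat N N" and UU: "cadj U * U = 1\<^sub>m N"
    using U by (auto simp: unitary_def)
  have UD: "U * real_diag_mat N e \<in> carrier_mat N N"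
    using Uc by simp
  have Hc: "H \<in> carrier_mat N N"
    unfolding H using UD cadj_carrier[OF Uc] by (rule mult_carrier_mat)
  have "H * U = U * real_diag_mat N e * (cadj U * U)"
    unfolding H using UD cadj_carrier[OF Uc] Uc by (rule assoc_mult_mat)
  then have HU: "H * U = U * real_diag_mat N e"
    using UD by (simp add: UU)
  have "H *\<^sub>v col U i = col (H * U) i"
    by (rule col_mult2[OF Hc Uc i, symmetric])
  also have "\<dots> = complex_of_real (e i) \<cdot>\<^sub>v col U i"
    unfolding HU using Uc i
    by (intro eq_vecI) (auto simp del: index_mult_mat(1) simp: index_mult_real_diag_mat)
  finally have ev: "H *\<^sub>v col U i = complex_of_real (e i) \<cdot>\<^sub>v col U i" .
  have "cadj U *\<^sub>v col U i = col (cadj U * U) i"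
    using col_mult2[OF cadj_carrier[OF Uc] Uc i] by simp
  then have unit: "cadj U *\<^sub>v col U i = Matrix.unit_vec N i"
    using i by (simp add: UU)
  have "col U i \<noteq> 0\<^sub>v N"
  proof
    assume "col U i = 0\<^sub>v N"
    then have "(cadj U *\<^sub>v col U i) $ i = 0"
      using Uc i by simp
    with unit i show False
      by simp
  qed
  then show ?thesis
    using ev Uc Hc i unfolding eigenvalue_def eigenvector_def by (intro exI[of _ "col U i"]) auto
qed

definition sqnorm :: "complex vec \<Rightarrow> real" where
  "sqnorm v = (\<Sum>i<dim_vec v. (cmod (v $ i))\<^sup>2)"

lemma cscalar_prod_self: "v \<bullet>c v = complex_of_real (sqnorm v)"
  unfolding sqnorm_def scalar_prod_def of_real_sum
  by (rule sum.cong) (simp_all add: atLeast0LessThan complex_norm_square del: of_real_power)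

lemma sqnorm_nonneg: "0 \<le> sqnorm v"
  unfolding sqnorm_def by (auto intro: sum_nonneg)

lemma sqnorm_pos:
  assumes "v \<in> carrier_vec N" "v \<noteq> 0\<^sub>v N"
  shows "0 < sqnorm v"
proof -
  obtain i where "i < N" "v $ i \<noteq> 0"
    using assms by (metis eq_vecI carrier_vecD index_zero_vec)
  then show ?thesis
    using assms unfolding sqnorm_def by (intro sum_pos2[of _ i]) auto
qed

lemma sqnorm_smult: "sqnorm (c \<cdot>\<^sub>v v) = (cmod c)\<^sup>2 * sqnorm v"
  unfolding sqnorm_def by (simp add: sum_distrib_left norm_mult power_mult_distrib)

lemma index_le_sqnorm: "x < dim_vec v \<Longrightarrow> cmod (v $ x) \<le> sqrt (sqnorm v)"
  unfolding sqnorm_def by (metis finite_lessThan lessThan_iff member_le_sum real_le_rsqrt zero_le_power2)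

lemma unit_vec_iff_sqnorm: "unit_vec N v \<longleftrightarrow> v \<in> carrier_vec N \<and> sqnorm v = 1"
  unfolding unit_vec_def sqnorm_def by auto

definition normalize_vec :: "complex vec \<Rightarrow> complex vec" where
  "normalize_vec v = complex_of_real (1 / sqrt (sqnorm v)) \<cdot>\<^sub>v v"

lemma normalize_vec_carrier [simp]:
  "dim_vec (normalize_vec v) = dim_vec v" "v \<in> carrier_vec N \<Longrightarrow> normalize_vec v \<in> carrier_vec N"
  by (auto simp: normalize_vec_def)

lemma sqnorm_normalize_vec:
  assumes "v \<in> carrier_vec N" "v \<noteq> 0\<^sub>v N"
  shows "sqnorm (normalize_vec v) = 1"
  using sqnorm_pos[OF assms] by (simp add: normalize_vec_def sqnorm_smult norm_divide power_divide)

lemma normalize_vec_unit: "sqnorm v = 1 \<Longrightarrow> normalize_vec v = v"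
  by (simp add: normalize_vec_def)

lemma cscalar_prod_normalize_vec:
  assumes "v \<in> carrier_vec N" "w \<in> carrier_vec N"
  shows "normalize_vec v \<bullet>c normalize_vec w =
    complex_of_real (1 / sqrt (sqnorm v) * (1 / sqrt (sqnorm w))) * (v \<bullet>c w)"
  using assms unfolding normalize_vec_def
  by (simp add: conjugate_smult_vec scalar_prod_smult_distrib[of _ N] smult_scalar_prod_distrib[of _ N])

section \<open>Spectral theorem for Hermitian matrices\<close>

lemma hermitian_eigenvalue_real:
  assumes H: "H \<in> carrier_mat N N" "cadj H = H" and ev: "eigenvector H v a"
  shows "Im a = 0"
proof -
  have v: "v \<in> carrier_vec N" "v \<noteq> 0\<^sub>v N" "H *\<^sub>v v = a \<cdot>\<^sub>v v"
    using ev H unfolding eigenvector_def by auto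
  have adj: "(H *\<^sub>v v) \<bullet>c v = v \<bullet>c (H *\<^sub>v v)"
    using cscalar_prod_mult_mat_vec[OF H(1) v(1) v(1)] H(2) by simp
  have "a * (v \<bullet>c v) = (a \<cdot>\<^sub>v v) \<bullet>c v"
    using v by (simp add: smult_scalar_prod_distrib[of _ N])
  also have "\<dots> = v \<bullet>c (a \<cdot>\<^sub>v v)"
    using adj v(3) by simp
  also have "\<dots> = cnj a * (v \<bullet>c v)"
    using v by (simp add: conjugate_smult_vec scalar_prod_smult_distrib[of _ N])
  finally have "a = cnj a"
    using sqnorm_pos[OF v(1,2)] by (simp add: cscalar_prod_self)
  then show ?thesis
    by (metis Reals_cnj_iff complex_is_Real_iff)
qed

lemma index_cadj_mult:
  assumes "i < dim_col A" "j < dim_col B" "dim_row A = dim_row B"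
  shows "(cadj A * B) $$ (i,j) = col B j \<bullet>c col A i"
  using assms by (simp add: scalar_prod_def mult.commute)

lemma unitary_of_corthogonal:
  assumes ws: "set ws \<subseteq> carrier_vec N" "corthogonal ws" "length ws = N"
  shows "unitary N (mat_of_cols N (map normalize_vec ws))" (is "unitary N ?W")
proof (rule unitaryI)
  have W: "?W \<in> carrier_mat N N"
    using mat_of_cols_carrier(1)[of N "map normalize_vec ws"] ws(3) by simp
  then show "?W \<in> carrier_mat N N" .
  have wsN: "ws ! i \<in> carrier_vec N" if "i < N" for i
    using ws that by auto
  have nz: "ws ! i \<noteq> 0\<^sub>v N" if "i < N" for i
    using corthogonalD[OF ws(2), of i i] ws(3) that by auto
  show "cadj ?W * ?W = 1\<^sub>m N"
  proof (rule eq_matI)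
    fix i j assume "i < dim_row (1\<^sub>m N)" "j < dim_col (1\<^sub>m N)"
    then have ij: "i < N" "j < N" by auto
    have "(cadj ?W * ?W) $$ (i,j) = normalize_vec (ws ! j) \<bullet>c normalize_vec (ws ! i)"
      using ij ws W wsN by (subst index_cadj_mult) auto
    also have "\<dots> = 1\<^sub>m N $$ (i,j)"
    proof (cases "i = j")
      case True
      then show ?thesis
        using ij sqnorm_normalize_vec[OF wsN nz] by (simp add: cscalar_prod_self)
    next
      case False
      then show ?thesis
        using ij ws corthogonalD[OF ws(2), of j i]
        by (simp add: cscalar_prod_normalize_vec[OF wsN wsN])
    qed
    finally show "(cadj ?W * ?W) $$ (i,j) = 1\<^sub>m N $$ (i,j)" .
  qed (use W in auto)
qed

lemma unitary_with_first_column: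
  assumes v: "v \<in> carrier_vec N" "sqnorm v = 1"
  obtains W where "unitary N W" "col W 0 = v"
proof -
  interpret cof_vec_space N "TYPE(complex)" .
  have v0: "v \<noteq> 0\<^sub>v N"
    using v by (auto simp: sqnorm_def)
  then have N: "0 < N"
    using v by (cases N) auto
  define b where "b = basis_completion v"
  from basis_completion[OF v(1) v0, folded b_def]
  have b: "distinct b" "\<not> lin_dep (set b)" "set b \<subseteq> carrier_vec N" "hd b = v" "length b = N"
    by auto
  then obtain vs where bv: "b = v # vs"
    using N by (cases b) auto
  define ws where "ws = gram_schmidt N b"
  from gram_schmidt_result[OF b(3,1,2) ws_def]
  have ws: "set ws \<subseteq> carrier_vec N" "corthogonal ws" "length ws = N"
    using b(5) by auto
  have "hd ws = v"
    using gram_schmidt_hd[OF v(1), of vs] by (simp add: ws_def bv)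
  then have "col (mat_of_cols N (map normalize_vec ws)) 0 = v"
    using ws N v by (cases ws) (auto simp: normalize_vec_unit)
  with unitary_of_corthogonal[OF ws] show thesis
    by (rule that)
qed

definition one_block_diag :: "nat \<Rightarrow> complex mat \<Rightarrow> complex mat" where
  "one_block_diag n U = mat (Suc n) (Suc n)
     (\<lambda>(i,j). if i = 0 \<and> j = 0 then 1 else if i = 0 \<or> j = 0 then 0 else U $$ (i - 1, j - 1))"

lemma one_block_diag_carrier [simp]:
  "one_block_diag n U \<in> carrier_mat (Suc n) (Suc n)"
  "dim_row (one_block_diag n U) = Suc n" "dim_col (one_block_diag n U) = Suc n"
  by (simp_all add: one_block_diag_def)

lemma unitary_one_block_diag:
  assumes U: "unitary n U"
  shows "unitary (Suc n) (one_block_diag n U)" (is "unitary _ ?B")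
proof (rule unitaryI)
  have Uc: "U \<in> carrier_mat n n" and UU: "cadj U * U = 1\<^sub>m n"
    using U by (auto simp: unitary_def)
  show "cadj ?B * ?B = 1\<^sub>m (Suc n)"
  proof (rule eq_matI)
    fix i j assume "i < dim_row (1\<^sub>m (Suc n))" "j < dim_col (1\<^sub>m (Suc n))"
    then have ij: "i < Suc n" "j < Suc n" by auto
    have "(cadj ?B * ?B) $$ (i,j) = (\<Sum>k<Suc n. cnj (?B $$ (k,i)) * ?B $$ (k,j))"
      using ij by (simp del: index_mult_mat(1) sum.lessThan_Suc add: index_mult_mat_sum)
    also have "\<dots> = cnj (?B $$ (0,i)) * ?B $$ (0,j) + (\<Sum>k<n. cnj (?B $$ (Suc k,i)) * ?B $$ (Suc k,j))"
      by (rule sum.lessThan_Suc_shift)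
    also have "\<dots> = 1\<^sub>m (Suc n) $$ (i,j)"
    proof (cases "i = 0 \<or> j = 0")
      case True
      then show ?thesis
        using ij by (auto simp: one_block_diag_def)
    next
      case False
      then obtain i' j' where ij': "i = Suc i'" "j = Suc j'" "i' < n" "j' < n"
        using ij by (cases i; cases j) auto
      have "(\<Sum>k<n. cnj (?B $$ (Suc k,i)) * ?B $$ (Suc k,j)) = (cadj U * U) $$ (i',j')"
        using ij' Uc by (simp del: index_mult_mat(1) add: index_mult_mat_sum one_block_diag_def)
      then show ?thesis
        using ij' by (simp add: UU one_block_diag_def)
    qed
    finally show "(cadj ?B * ?B) $$ (i,j) = 1\<^sub>m (Suc n) $$ (i,j)" .
  qed auto
qed simp

lemma one_block_diag_conj:
  assumes U: "U \<in> carrier_mat n n" and A: "A \<in> carrier_mat (Suc n) (Suc n)"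
    and col0: "\<And>i. i < Suc n \<Longrightarrow> A $$ (i,0) = (if i = 0 then complex_of_real r else 0)"
    and row0: "\<And>j. j < Suc n \<Longrightarrow> A $$ (0,j) = (if j = 0 then complex_of_real r else 0)"
    and block: "\<And>i j. i < n \<Longrightarrow> j < n \<Longrightarrow> A $$ (Suc i, Suc j) = (U * real_diag_mat n e * cadj U) $$ (i,j)"
  shows "A = one_block_diag n U * real_diag_mat (Suc n) (case_nat r e) * cadj (one_block_diag n U)"
    (is "A = ?B * ?D * cadj ?B")
proof (rule eq_matI)
  fix i j assume "i < dim_row (?B * ?D * cadj ?B)" "j < dim_col (?B * ?D * cadj ?B)"
  then have ij: "i < Suc n" "j < Suc n" by auto
  have "(?B * ?D * cadj ?B) $$ (i,j) =
      ?B $$ (i,0) * complex_of_real r * cnj (?B $$ (j,0)) +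
      (\<Sum>k<n. ?B $$ (i,Suc k) * complex_of_real (e k) * cnj (?B $$ (j,Suc k)))"
    using ij by (subst index_real_diag_conj) (simp_all del: sum.lessThan_Suc add: sum.lessThan_Suc_shift)
  also have "\<dots> = A $$ (i,j)"
  proof (cases "i = 0 \<or> j = 0")
    case True
    then show ?thesis
      using ij col0 row0 by (auto simp: one_block_diag_def)
  next
    case False
    then obtain i' j' where ij': "i = Suc i'" "j = Suc j'" "i' < n" "j' < n"
      using ij by (cases i; cases j) auto
    then show ?thesis
      using index_real_diag_conj[OF U ij'(3,4)] by (simp add: one_block_diag_def block)
  qed
  finally show "A $$ (i,j) = (?B * ?D * cadj ?B) $$ (i,j)" ..
qed (use A in auto)

lemma hermitian_cadj_conj:
  assumes X: "X \<in> carrier_mat r c" and H: "H \<in> carrier_mat r r" "cadj H = H"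
  shows "cadj (cadj X * H * X) = cadj X * H * X"
proof -
  have "cadj (cadj X * H * X) = cadj X * cadj (cadj X * H)"
    using cadj_mult[OF mult_carrier_mat[OF cadj_carrier[OF X] H(1)] X] by simp
  also have "\<dots> = cadj X * (H * X)"
    using cadj_mult[OF cadj_carrier[OF X] H(1)] H(2) by simp
  finally show ?thesis
    using X H by (simp add: assoc_mult_mat[of _ c r _ r _ c])
qed

lemma hermitian_max_eigenvector:
  assumes H: "H \<in> carrier_mat N N" "cadj H = H" and N: "0 < N"
  obtains r v where "v \<in> carrier_vec N" "sqnorm v = 1" "H *\<^sub>v v = complex_of_real r \<cdot>\<^sub>v v"
    "\<And>\<mu>. eigenvalue H \<mu> \<Longrightarrow> Re \<mu> \<le> r"
proof -
  obtain as where cp: "char_poly H = (\<Prod>a\<leftarrow>as. [:- a, 1:])" "length as = N"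
    using char_poly_factorized[OF H(1)] by auto
  have eigenvalue_iff: "eigenvalue H a \<longleftrightarrow> a \<in> set as" for a
    unfolding eigenvalue_root_char_poly[OF H(1)] cp poly_prod_list_zero_iff by auto
  have "Max (Re ` set as) \<in> Re ` set as"
    using cp(2) N by (intro Max_in) auto
  then obtain l where l: "l \<in> set as" "Re l = Max (Re ` set as)"
    by auto
  obtain v0 where v0: "eigenvector H v0 l"
    using find_eigenvector[OF H(1)] eigenvalue_iff l(1) by blast
  have l_real: "complex_of_real (Re l) = l"
    using hermitian_eigenvalue_real[OF H v0] by (simp add: complex_eq_iff)
  have v0c: "v0 \<in> carrier_vec N" "v0 \<noteq> 0\<^sub>v N" "H *\<^sub>v v0 = l \<cdot>\<^sub>v v0"
    using v0 H unfolding eigenvector_def by auto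
  show thesis
  proof (rule that[of "normalize_vec v0" "Re l"])
    show "normalize_vec v0 \<in> carrier_vec N" "sqnorm (normalize_vec v0) = 1"
      using v0c(1) sqnorm_normalize_vec[OF v0c(1,2)] by simp_all
    show "H *\<^sub>v normalize_vec v0 = complex_of_real (Re l) \<cdot>\<^sub>v normalize_vec v0"
      using v0c H(1) l_real by (simp add: normalize_vec_def mult_mat_vec smult_smult_assoc mult.commute)
    show "Re \<mu> \<le> Re l" if "eigenvalue H \<mu>" for \<mu>
      using that eigenvalue_iff by (simp add: l(2))
  qed
qed

lemma hermitian_deflation:
  assumes H: "H \<in> carrier_mat (Suc n) (Suc n)" "cadj H = H"
    and v: "v \<in> carrier_vec (Suc n)" "sqnorm v = 1" "H *\<^sub>v v = complex_of_real r \<cdot>\<^sub>v v"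
  obtains W A where "unitary (Suc n) W" "A \<in> carrier_mat n n" "cadj A = A"
    "\<And>U e. U \<in> carrier_mat n n \<Longrightarrow> A = U * real_diag_mat n e * cadj U \<Longrightarrow>
       H = (W * one_block_diag n U) * real_diag_mat (Suc n) (case_nat r e) * cadj (W * one_block_diag n U)"
proof -
  obtain W where W: "unitary (Suc n) W" "col W 0 = v"
    using unitary_with_first_column[OF v(1,2)] .
  have Wc: "W \<in> carrier_mat (Suc n) (Suc n)" and WW: "cadj W * W = 1\<^sub>m (Suc n)"
    using W(1) by (auto simp: unitary_def)
  define B where "B = cadj W * H * W"
  have B: "B \<in> carrier_mat (Suc n) (Suc n)" "cadj B = B"
    using Wc H unfolding B_def by (simp_all add: mult_carrier_mat[of _ "Suc n" "Suc n"] hermitian_cadj_conj)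
  have col0: "B $$ (i,0) = (if i = 0 then complex_of_real r else 0)" if i: "i < Suc n" for i
  proof -
    have "B $$ (i,0) = (cadj W * (H * W)) $$ (i,0)"
      using Wc H by (simp add: B_def assoc_mult_mat[of _ "Suc n" "Suc n" _ "Suc n" _ "Suc n"])
    also have "\<dots> = row (cadj W) i \<bullet> (H *\<^sub>v col W 0)"
      using i Wc H col_mult2[OF H(1) Wc, of 0] by (simp del: col_mult)
    also have "\<dots> = complex_of_real r * (cadj W * W) $$ (i,0)"
      using i Wc by (simp add: W(2) v(3) v(1) scalar_prod_smult_distrib[of _ "Suc n"])
    finally show ?thesis
      using i by (simp add: WW)
  qed
  have row0: "B $$ (0,j) = (if j = 0 then complex_of_real r else 0)" if j: "j < Suc n" for j
    using arg_cong[OF B(2), of "\<lambda>M. M $$ (0,j)"] col0[OF j] B(1) j by auto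
  define A where "A = mat n n (\<lambda>(i,j). B $$ (Suc i, Suc j))"
  have "cnj (B $$ (Suc j, Suc i)) = B $$ (Suc i, Suc j)" if "i < n" "j < n" for i j
    using arg_cong[OF B(2), of "\<lambda>M. M $$ (Suc i, Suc j)"] B(1) that by simp
  then have A: "A \<in> carrier_mat n n" "cadj A = A"
    by (auto simp: A_def intro!: eq_matI)
  have H_eq: "H = W * B * cadj W"
    using Wc H unitary_cancel(1)[OF W(1), of "H * (W * cadj W)" "Suc n"] W(1)
    by (simp add: B_def unitary_def assoc_mult_mat[of _ "Suc n" "Suc n" _ "Suc n" _ "Suc n"]
        mult_carrier_mat[of _ "Suc n" "Suc n" _ "Suc n"])
  show thesis
  proof (rule that[OF W(1) A])
    fix U e assume U: "U \<in> carrier_mat n n" and A_eq: "A = U * real_diag_mat n e * cadj U"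
    have "B $$ (Suc i, Suc j) = A $$ (i,j)" if "i < n" "j < n" for i j
      using that by (simp add: A_def)
    note block = this[unfolded A_eq]
    have "B = one_block_diag n U * real_diag_mat (Suc n) (case_nat r e) * cadj (one_block_diag n U)"
      by (rule one_block_diag_conj[OF U B(1) col0 row0 block])
    then show "H = (W * one_block_diag n U) * real_diag_mat (Suc n) (case_nat r e) * cadj (W * one_block_diag n U)"
      using Wc H_eq by (simp add: cadj_mult[of W "Suc n" "Suc n" _ "Suc n"]
          assoc_mult_mat[of _ "Suc n" "Suc n" _ "Suc n" _ "Suc n"] mult_carrier_mat[of _ "Suc n" "Suc n" _ "Suc n"])
  qed
qed

theorem hermitian_spectral:
  assumes "H \<in> carrier_mat N N" "cadj H = H"
  shows "\<exists>U e. unitary N U \<and> (\<forall>i j. i \<le> j \<longrightarrow> j < N \<longrightarrow> e j \<le> e i) \<and>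
    H = U * real_diag_mat N e * cadj U"
  using assms
proof (induction N arbitrary: H)
  case 0
  then have "H = 1\<^sub>m 0 * real_diag_mat 0 (\<lambda>_. 0) * cadj (1\<^sub>m 0)"
    by (intro eq_matI) auto
  moreover have "unitary 0 (1\<^sub>m 0)"
    by (simp add: unitary_def)
  ultimately show ?case
    by blast
next
  case (Suc n H)
  obtain r v where v: "v \<in> carrier_vec (Suc n)" "sqnorm v = 1" "H *\<^sub>v v = complex_of_real r \<cdot>\<^sub>v v"
    and r_max: "\<And>\<mu>. eigenvalue H \<mu> \<Longrightarrow> Re \<mu> \<le> r"
    using hermitian_max_eigenvector[OF Suc.prems] by blast
  obtain W A where W: "unitary (Suc n) W" and A: "A \<in> carrier_mat n n" "cadj A = A"
    and H_eq: "\<And>U e. U \<in> carrier_mat n n \<Longrightarrow> A = U * real_diag_mat n e * cadj U \<Longrightarrow>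
       H = (W * one_block_diag n U) * real_diag_mat (Suc n) (case_nat r e) * cadj (W * one_block_diag n U)"
    using hermitian_deflation[OF Suc.prems v] by blast
  obtain U e where U: "unitary n U" and sorted: "\<forall>i j. i \<le> j \<longrightarrow> j < n \<longrightarrow> e j \<le> e i"
    and A_eq: "A = U * real_diag_mat n e * cadj U"
    using Suc.IH[OF A] by blast
  define U' where "U' = W * one_block_diag n U"
  have U': "unitary (Suc n) U'"
    unfolding U'_def using W unitary_one_block_diag[OF U] by (rule unitary_mult)
  have H: "H = U' * real_diag_mat (Suc n) (case_nat r e) * cadj U'"
    unfolding U'_def using H_eq[OF unitary_carrier[OF U] A_eq] .
  have top: "case_nat r e j \<le> r" if "j < Suc n" for j
    using r_max[OF eigenvalue_unitary_diag[OF U' H that]] by simp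
  have "\<forall>i j. i \<le> j \<longrightarrow> j < Suc n \<longrightarrow> case_nat r e j \<le> case_nat r e i"
  proof (intro allI impI)
    fix i j assume ij: "i \<le> j" "j < Suc n"
    then show "case_nat r e j \<le> case_nat r e i"
      using top[OF ij(2)] sorted by (cases i; cases j) auto
  qed
  with U' H show ?case
    by blast
qed

section \<open>Singular values via a spectral decomposition of the Gram matrix\<close>

lemma sorted_nonneg_eq_of_square_roots:
  fixes s t :: "real list"
  assumes sorted: "sorted_wrt (\<ge>) s" "sorted_wrt (\<ge>) t"
    and nonneg: "\<forall>x\<in>set s. 0 \<le> x" "\<forall>x\<in>set t. 0 \<le> x"
    and prod: "(\<Prod>x\<leftarrow>s. [:- complex_of_real (x\<^sup>2), 1:]) = (\<Prod>x\<leftarrow>t. [:- complex_of_real (x\<^sup>2), 1:])"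
  shows "s = t"
proof -
  let ?g = "\<lambda>x::real. complex_of_real (x\<^sup>2)"
  have "mset (map ?g s) = mset (map ?g t)"
    using prod by (intro reconstruct_poly_monic_defines_mset) (simp add: o_def)
  then have "mset (map (\<lambda>z. sqrt (Re z)) (map ?g s)) = mset (map (\<lambda>z. sqrt (Re z)) (map ?g t))"
    by (simp only: mset_map)
  moreover have "map (\<lambda>z. sqrt (Re z)) (map ?g u) = u" if "\<forall>x\<in>set u. 0 \<le> x" for u
    using that by (induction u) (auto simp del: of_real_power)
  ultimately have "mset (rev s) = mset (rev t)"
    using nonneg by (simp only: mset_rev)
  moreover have "sorted (rev s)" "sorted (rev t)"
    using sorted by (simp_all add: sorted_wrt_rev)
  ultimately have "rev s = rev t"
    by (metis properties_for_sort)
  then show ?thesis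
    by simp
qed

lemma sing_vals_eqI:
  assumes "length s = dim_row A" "sorted_wrt (\<ge>) s" "\<forall>x\<in>set s. 0 \<le> x"
    and "char_poly (A * cadj A) = (\<Prod>x\<leftarrow>s. [:- complex_of_real (x\<^sup>2), 1:])"
  shows "sing_vals A = s"
proof -
  let ?P = "\<lambda>s. length s = dim_row A \<and> sorted_wrt (\<ge>) s \<and> (\<forall>x\<in>set s. 0 \<le> x) \<and>
      char_poly (A * cadj A) = (\<Prod>x\<leftarrow>s. [:- complex_of_real (x\<^sup>2), 1:])"
  have "?P (sing_vals A)"
    unfolding sing_vals_def using assms by (intro someI[of ?P s]) auto
  then show ?thesis
    using assms by (intro sorted_nonneg_eq_of_square_roots) auto
qed

lemma sing_vals_of_spectral:
  assumes A: "A \<in> carrier_mat n m" and U: "unitary n U"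
    and eq: "A * cadj A = U * real_diag_mat n f * cadj U"
    and nonneg: "\<And>i. i < n \<Longrightarrow> 0 \<le> f i"
    and sorted: "\<And>i j. i \<le> j \<Longrightarrow> j < n \<Longrightarrow> f j \<le> f i"
  shows "sing_vals A = map (\<lambda>i. sqrt (f i)) [0..<n]"
proof (rule sing_vals_eqI)
  have Uc: "U \<in> carrier_mat n n" and UU: "cadj U * U = 1\<^sub>m n" "U * cadj U = 1\<^sub>m n"
    using U by (auto simp: unitary_def)
  have "similar_mat_wit (A * cadj A) (real_diag_mat n f) U (cadj U)"
    unfolding similar_mat_wit_def Let_def using A Uc UU eq by auto
  then have "char_poly (A * cadj A) = char_poly (real_diag_mat n f)"
    by (intro char_poly_similar) (auto simp: similar_mat_def)
  also have "\<dots> = (\<Prod>a\<leftarrow>diag_mat (real_diag_mat n f). [:- a, 1:])"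
    by (rule char_poly_upper_triangular[of _ n]) (auto simp: upper_triangular_def)
  also have "diag_mat (real_diag_mat n f) = map (\<lambda>i. complex_of_real ((sqrt (f i))\<^sup>2)) [0..<n]"
    using nonneg by (auto simp: diag_mat_def simp del: of_real_power)
  finally show "char_poly (A * cadj A) = (\<Prod>x\<leftarrow>map (\<lambda>i. sqrt (f i)) [0..<n]. [:- complex_of_real (x\<^sup>2), 1:])"
    by (simp add: o_def)
  show "sorted_wrt (\<ge>) (map (\<lambda>i. sqrt (f i)) [0..<n])"
    by (auto simp: sorted_wrt_map sorted_wrt_iff_nth_less sorted)
qed (use A nonneg in auto)

lemma index_mult_cadj_self:
  assumes "B \<in> carrier_mat n m" "i < n"
  shows "(B * cadj B) $$ (i,i) = complex_of_real (\<Sum>j<m. (cmod (B $$ (i,j)))\<^sup>2)"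
  using assms
  by (simp del: index_mult_mat(1) of_real_power add: index_mult_mat_sum complex_norm_square)

lemma gram_unitary_conj:
  assumes A: "A \<in> carrier_mat n m" and U: "unitary n U"
    and eq: "A * cadj A = U * real_diag_mat n e * cadj U"
  shows "(cadj U * A) * cadj (cadj U * A) = real_diag_mat n e"
proof -
  have Uc: "U \<in> carrier_mat n n"
    using U by (rule unitary_carrier)
  have "(cadj U * A) * cadj (cadj U * A) = cadj U * A * (cadj A * U)"
    by (simp add: cadj_mult[OF cadj_carrier[OF Uc] A])
  also have "\<dots> = cadj U * (A * (cadj A * U))"
    by (rule assoc_mult_mat[of _ n n _ m _ n]) (use A Uc in auto)
  also have "A * (cadj A * U) = A * cadj A * U"
    by (rule assoc_mult_mat[symmetric, of _ n m _ n _ n]) (use A Uc in auto)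
  also have "cadj U * (A * cadj A * U) = cadj U * (U * (real_diag_mat n e * (cadj U * U)))"
    using Uc by (simp add: eq assoc_mult_mat[of _ n n _ n _ n] mult_carrier_mat[of _ n n _ n])
  also have "\<dots> = real_diag_mat n e"
    using U unitary_cancel(2)[OF U, of "real_diag_mat n e" n] by (simp add: unitary_def)
  finally show ?thesis .
qed

lemma spectral_nonneg_of_gram:
  assumes A: "A \<in> carrier_mat n m" and U: "unitary n U"
    and eq: "A * cadj A = U * real_diag_mat n e * cadj U" and i: "i < n"
  shows "0 \<le> e i"
proof -
  have B: "cadj U * A \<in> carrier_mat n m"
    using mult_carrier_mat[OF cadj_carrier[OF unitary_carrier[OF U]] A] .
  have "complex_of_real (e i) = ((cadj U * A) * cadj (cadj U * A)) $$ (i,i)"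
    using gram_unitary_conj[OF A U eq] i by simp
  also have "\<dots> = complex_of_real (\<Sum>j<m. (cmod ((cadj U * A) $$ (i,j)))\<^sup>2)"
    using index_mult_cadj_self[OF B i] .
  finally have "e i = (\<Sum>j<m. (cmod ((cadj U * A) $$ (i,j)))\<^sup>2)"
    by (simp only: of_real_eq_iff)
  then show ?thesis
    by (simp add: sum_nonneg)
qed

lemma card_le_of_corthogonal:
  fixes w :: "nat \<Rightarrow> complex vec"
  assumes fin: "finite I" and carrier: "\<And>i. i \<in> I \<Longrightarrow> w i \<in> carrier_vec m"
    and nonzero: "\<And>i. i \<in> I \<Longrightarrow> w i \<noteq> 0\<^sub>v m"
    and orth: "\<And>i j. i \<in> I \<Longrightarrow> j \<in> I \<Longrightarrow> i \<noteq> j \<Longrightarrow> w i \<bullet>c w j = 0"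
  shows "card I \<le> m"
proof -
  interpret vec_space "TYPE(complex)" m .
  have pos: "w i \<bullet>c w i \<noteq> 0" if "i \<in> I" for i
    using sqnorm_pos[OF carrier[OF that] nonzero[OF that]] by (simp add: cscalar_prod_self)
  have inj: "inj_on w I"
    using orth pos by (metis inj_onI)
  have S: "w ` I \<subseteq> carrier_vec m"
    using carrier by auto
  have "\<not> lin_dep (w ` I)"
  proof
    assume "lin_dep (w ` I)"
    then obtain A a v where A: "finite A" "A \<subseteq> w ` I" and a: "a \<in> A \<rightarrow> carrier class_ring"
      and lc: "lincomb a A = 0\<^sub>v m" and v: "v \<in> A" and av: "a v \<noteq> 0"
      unfolding lin_dep_def by auto
    have AC: "A \<subseteq> carrier_vec m" and vC: "v \<in> carrier_vec m"
      using A S v by auto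
    have "0 = lincomb a A \<bullet>c v"
      using vC by (simp add: lc)
    also have "\<dots> = (\<Sum>x\<in>A. a x * (x \<bullet>c v))"
      unfolding scalar_prod_def using vC AC
      by (simp add: lincomb_index sum_distrib_right sum_distrib_left atLeast0LessThan mult.assoc,
          subst sum.swap) (auto intro!: sum.cong)
    also have "\<dots> = a v * (v \<bullet>c v)"
    proof -
      have "x \<bullet>c v = 0" if x: "x \<in> A - {v}" for x
      proof -
        obtain i j where ij: "i \<in> I" "j \<in> I" "x = w i" "v = w j"
          using x A(2) v by blast
        then have "i \<noteq> j"
          using x by auto
        then show ?thesis
          using orth ij by simp
      qed
      then show ?thesis
        by (simp add: sum.remove[OF A(1) v])
    qed
    finally show False
      using pos av A v by auto
  qed
  then have "card (w ` I) \<le> dim"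
    by (rule li_le_dim(2)[OF fin_dim S])
  then show ?thesis
    using card_image[OF inj] dim_is_n by simp
qed

lemma spectral_vanishes_of_gram:
  assumes A: "A \<in> carrier_mat n m" and U: "unitary n U"
    and eq: "A * cadj A = U * real_diag_mat n e * cadj U"
    and sorted: "\<And>i j. i \<le> j \<Longrightarrow> j < n \<Longrightarrow> e j \<le> e i"
    and i: "m \<le> i" "i < n"
  shows "e i = 0"
proof (rule ccontr)
  assume "e i \<noteq> 0"
  then have pos: "0 < e j" if "j \<le> i" for j
    using spectral_nonneg_of_gram[OF A U eq] sorted[OF that] i by force
  define B where "B = cadj U * A"
  have B: "B \<in> carrier_mat n m"
    unfolding B_def using mult_carrier_mat[OF cadj_carrier[OF unitary_carrier[OF U]] A] .
  have rows: "row B j \<bullet>c row B k = (if j = k then complex_of_real (e j) else 0)" if "j < n" "k < n" for j k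
  proof -
    have "row B j \<bullet>c row B k = (B * cadj B) $$ (j,k)"
      using that B by (simp add: scalar_prod_def atLeast0LessThan)
    then show ?thesis
      using that gram_unitary_conj[OF A U eq] by (simp add: B_def)
  qed
  have "card {0..m} \<le> m"
  proof (rule card_le_of_corthogonal[of _ "row B"])
    fix j assume "j \<in> {0..m}"
    then have j: "j < n" "j \<le> i"
      using i by auto
    show "row B j \<in> carrier_vec m"
      using B by auto
    show "row B j \<noteq> 0\<^sub>v m"
      using rows[OF j(1) j(1)] pos[OF j(2)] by auto
  next
    fix j k assume "j \<in> {0..m}" "k \<in> {0..m}" "j \<noteq> k"
    then show "row B j \<bullet>c row B k = 0"
      using rows[of j k] i by auto
  qed auto
  then show False
    by simp
qed

(* e lists the squared Schmidt coefficients when A is the coefficient matrix of a vector. *)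
definition gram_decomp :: "nat \<Rightarrow> nat \<Rightarrow> complex mat \<Rightarrow> complex mat \<Rightarrow> (nat \<Rightarrow> real) \<Rightarrow> bool" where
  "gram_decomp n m A U e \<longleftrightarrow> A \<in> carrier_mat n m \<and> unitary n U \<and>
     (\<forall>i j. i \<le> j \<longrightarrow> j < n \<longrightarrow> e j \<le> e i) \<and> (\<forall>i<n. 0 \<le> e i) \<and> (\<forall>i. m \<le> i \<longrightarrow> i < n \<longrightarrow> e i = 0) \<and>
     A * cadj A = U * real_diag_mat n e * cadj U"

lemma gram_decomp_exists:
  assumes A: "A \<in> carrier_mat n m"
  obtains U e where "gram_decomp n m A U e"
proof -
  obtain U e where U: "unitary n U" and sorted: "\<forall>i j. i \<le> j \<longrightarrow> j < n \<longrightarrow> e j \<le> e i"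
    and eq: "A * cadj A = U * real_diag_mat n e * cadj U"
    using hermitian_spectral[OF mult_carrier_mat[OF A cadj_carrier[OF A]] cadj_mult_hermitian[OF A]]
    by blast
  have "gram_decomp n m A U e"
    unfolding gram_decomp_def
    using A U sorted eq spectral_nonneg_of_gram[OF A U eq] spectral_vanishes_of_gram[OF A U eq]
    by blast
  then show thesis
    by (rule that)
qed

section \<open>Reweighting the Schmidt coefficients\<close>

lemma sum_lessThan_mult_nat:
  fixes f :: "nat \<Rightarrow> 'a :: comm_monoid_add"
  shows "(\<Sum>x<n * m. f x) = (\<Sum>i<n. \<Sum>j<m. f (i * m + j))"
proof -
  have "(\<Sum>x<n * m. f x) = (\<Sum>i<n. sum f {i * m..<i * m + m})"
    by (rule sum.nat_group[symmetric])
  also have "\<dots> = (\<Sum>i<n. \<Sum>j<m. f (i * m + j))"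
  proof (rule sum.cong[OF refl])
    fix i
    have "sum f {i * m..<i * m + m} = sum f {0 + i * m..<m + i * m}"
      by (simp add: add.commute)
    also have "\<dots> = (\<Sum>j = 0..<m. f (j + i * m))"
      by (rule sum.shift_bounds_nat_ivl)
    finally show "sum f {i * m..<i * m + m} = (\<Sum>j<m. f (i * m + j))"
      by (simp add: atLeast0LessThan add.commute)
  qed
  finally show ?thesis .
qed

lemma pair_index_less:
  fixes i j n m :: nat
  assumes "i < n" "j < m"
  shows "i * m + j < n * m"
proof -
  have "i * m + j < Suc i * m"
    using assms(2) by simp
  also have "\<dots> \<le> n * m"
    using assms(1) by (intro mult_right_mono) auto
  finally show ?thesis .
qed

definition vec_of_coeff_mat :: "nat \<Rightarrow> nat \<Rightarrow> complex mat \<Rightarrow> complex vec" where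
  "vec_of_coeff_mat n m B = vec (n * m) (\<lambda>x. B $$ (x div m, x mod m))"

lemma vec_of_coeff_mat_carrier [simp]:
  "vec_of_coeff_mat n m B \<in> carrier_vec (n * m)" "dim_vec (vec_of_coeff_mat n m B) = n * m"
  by (auto simp: vec_of_coeff_mat_def)

lemma coeff_mat_carrier [simp]:
  "coeff_mat n m \<psi> \<in> carrier_mat n m" "dim_row (coeff_mat n m \<psi>) = n" "dim_col (coeff_mat n m \<psi>) = m"
  by (auto simp: coeff_mat_def)

lemma coeff_mat_vec_of_coeff_mat:
  assumes "B \<in> carrier_mat n m"
  shows "coeff_mat n m (vec_of_coeff_mat n m B) = B"
  using assms pair_index_less by (intro eq_matI) (auto simp: coeff_mat_def vec_of_coeff_mat_def)

lemma vec_of_coeff_mat_coeff_mat: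
  assumes "\<psi> \<in> carrier_vec (n * m)"
  shows "vec_of_coeff_mat n m (coeff_mat n m \<psi>) = \<psi>"
proof (rule eq_vecI)
  fix x assume "x < dim_vec \<psi>"
  then have x: "x < n * m"
    using assms by auto
  moreover have "0 < m"
    using x by (cases m) auto
  ultimately have "x div m < n" "x mod m < m"
    by (auto simp: less_mult_imp_div_less)
  then show "vec_of_coeff_mat n m (coeff_mat n m \<psi>) $ x = \<psi> $ x"
    using x by (simp add: vec_of_coeff_mat_def coeff_mat_def)
qed (use assms in auto)

lemma sqnorm_vec_of_coeff_mat:
  assumes "B \<in> carrier_mat n m"
  shows "sqnorm (vec_of_coeff_mat n m B) = (\<Sum>i<n. \<Sum>j<m. (cmod (B $$ (i,j)))\<^sup>2)"
  unfolding sqnorm_def using assms pair_index_less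
  by (simp add: sum_lessThan_mult_nat vec_of_coeff_mat_def)

lemma sqnorm_col_unitary:
  assumes U: "unitary n U" and k: "k < n"
  shows "(\<Sum>i<n. (cmod (U $$ (i,k)))\<^sup>2) = 1"
proof -
  have Uc: "U \<in> carrier_mat n n"
    using U by (rule unitary_carrier)
  have "complex_of_real (sqnorm (col U k)) = (cadj U * U) $$ (k,k)"
    using Uc k by (simp only: cscalar_prod_self[symmetric] index_cadj_mult carrier_matD)
  then have "sqnorm (col U k) = 1"
    using U k by (simp add: unitary_def)
  then show ?thesis
    using Uc k by (simp add: sqnorm_def)
qed

lemma sum_sq_cmod_of_spectral:
  assumes B: "B \<in> carrier_mat n m" and U: "unitary n U"
    and eq: "B * cadj B = U * real_diag_mat n f * cadj U"
  shows "(\<Sum>i<n. \<Sum>j<m. (cmod (B $$ (i,j)))\<^sup>2) = (\<Sum>k<n. f k)"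
proof -
  have Uc: "U \<in> carrier_mat n n"
    using U by (rule unitary_carrier)
  have "(\<Sum>i<n. (B * cadj B) $$ (i,i)) = (\<Sum>i<n. complex_of_real (\<Sum>j<m. (cmod (B $$ (i,j)))\<^sup>2))"
    using index_mult_cadj_self[OF B] by (intro sum.cong) auto
  then have "complex_of_real (\<Sum>i<n. \<Sum>j<m. (cmod (B $$ (i,j)))\<^sup>2) = (\<Sum>i<n. (B * cadj B) $$ (i,i))"
    by (simp only: of_real_sum)
  also have "\<dots> = (\<Sum>i<n. \<Sum>k<n. U $$ (i,k) * complex_of_real (f k) * cnj (U $$ (i,k)))"
    unfolding eq using Uc by (intro sum.cong refl index_real_diag_conj) auto
  also have "\<dots> = (\<Sum>k<n. complex_of_real (f k) * complex_of_real (\<Sum>i<n. (cmod (U $$ (i,k)))\<^sup>2))"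
    by (subst sum.swap) (simp add: sum_distrib_left complex_norm_square mult.commute mult.left_commute
        del: of_real_power)
  also have "\<dots> = complex_of_real (\<Sum>k<n. f k)"
    using sqnorm_col_unitary[OF U] by simp
  finally show ?thesis
    by (simp only: of_real_eq_iff)
qed

lemma real_diag_conj_mult:
  assumes U: "unitary n U"
  shows "U * real_diag_mat n a * cadj U * (U * real_diag_mat n b * cadj U) =
    U * real_diag_mat n (\<lambda>i. a i * b i) * cadj U"
proof -
  have Uc: "U \<in> carrier_mat n n"
    using U by (rule unitary_carrier)
  have "U * real_diag_mat n a * cadj U * (U * real_diag_mat n b * cadj U) =
      U * (real_diag_mat n a * (cadj U * (U * (real_diag_mat n b * cadj U))))"
    using Uc by (simp add: assoc_mult_mat[of _ n n _ n _ n] mult_carrier_mat[of _ n n _ n])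
  also have "\<dots> = U * (real_diag_mat n a * (real_diag_mat n b * cadj U))"
    using unitary_cancel(2)[OF U mult_carrier_mat[OF real_diag_mat_carrier(1) cadj_carrier[OF Uc]]]
    by simp
  also have "real_diag_mat n a * (real_diag_mat n b * cadj U) = real_diag_mat n (\<lambda>i. a i * b i) * cadj U"
    by (subst assoc_mult_mat[symmetric, of _ n n _ n _ n]) (use Uc in \<open>auto simp: real_diag_mat_mult\<close>)
  finally show ?thesis
    using Uc by (simp add: assoc_mult_mat[of _ n n _ n _ n])
qed

lemma gram_of_real_diag_conj_mult:
  assumes A: "A \<in> carrier_mat n m" and U: "unitary n U"
    and eq: "A * cadj A = U * real_diag_mat n e * cadj U"
  shows "(U * real_diag_mat n c * cadj U * A) * cadj (U * real_diag_mat n c * cadj U * A) =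
    U * real_diag_mat n (\<lambda>i. (c i)\<^sup>2 * e i) * cadj U"
proof -
  define X where "X = U * real_diag_mat n c * cadj U"
  have X: "X \<in> carrier_mat n n" "cadj X = X"
    using unitary_carrier[OF U] by (simp_all add: X_def hermitian_real_diag_conj mult_carrier_mat[of _ n n])
  have "(X * A) * cadj (X * A) = X * A * (cadj A * X)"
    using X by (simp add: cadj_mult[OF X(1) A])
  also have "\<dots> = X * (A * (cadj A * X))"
    by (rule assoc_mult_mat[of _ n n _ m _ n]) (use A X in auto)
  also have "A * (cadj A * X) = A * cadj A * X"
    by (rule assoc_mult_mat[symmetric, of _ n m _ n _ n]) (use A X in auto)
  also have "X * (A * cadj A * X) = X * (A * cadj A) * X"
    by (rule assoc_mult_mat[symmetric, of _ n n _ n _ n]) (use A X in auto)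
  also have "\<dots> = U * real_diag_mat n (\<lambda>i. c i * e i * c i) * cadj U"
    unfolding X_def eq by (simp add: real_diag_conj_mult[OF U])
  also have "(\<lambda>i. c i * e i * c i) = (\<lambda>i. (c i)\<^sup>2 * e i)"
    by (auto simp: power2_eq_square)
  finally show ?thesis
    unfolding X_def .
qed

(* In tensor notation reweight n m U psi c = (U diag(c) U* (x) 1) psi. *)
definition reweight :: "nat \<Rightarrow> nat \<Rightarrow> complex mat \<Rightarrow> complex vec \<Rightarrow> (nat \<Rightarrow> real) \<Rightarrow> complex vec" where
  "reweight n m U \<psi> c = vec_of_coeff_mat n m (U * real_diag_mat n c * cadj U * coeff_mat n m \<psi>)"

lemma real_diag_conj_carrier [simp]:
  "U \<in> carrier_mat n n \<Longrightarrow> U * real_diag_mat n c * cadj U \<in> carrier_mat n n"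
  by (metis cadj_carrier mult_carrier_mat real_diag_mat_carrier(1))

lemma reweight_carrier [simp]:
  "reweight n m U \<psi> c \<in> carrier_vec (n * m)" "dim_vec (reweight n m U \<psi> c) = n * m"
  by (simp_all add: reweight_def)

lemma coeff_mat_reweight:
  assumes "U \<in> carrier_mat n n"
  shows "coeff_mat n m (reweight n m U \<psi> c) = U * real_diag_mat n c * cadj U * coeff_mat n m \<psi>"
  unfolding reweight_def using assms
  by (intro coeff_mat_vec_of_coeff_mat mult_carrier_mat[of _ n n _ m]) simp_all

lemma reweight_one:
  assumes "unitary n U" "\<psi> \<in> carrier_vec (n * m)"
  shows "reweight n m U \<psi> (\<lambda>_. 1) = \<psi>"
proof -
  have "U * real_diag_mat n (\<lambda>_. 1) * cadj U = 1\<^sub>m n"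
    using assms(1) by (simp add: real_diag_mat_one unitary_def right_mult_one_mat[of U n n])
  then show ?thesis
    using assms(2) by (simp add: reweight_def vec_of_coeff_mat_coeff_mat left_mult_one_mat[OF coeff_mat_carrier(1)])
qed

lemma index_reweight:
  assumes U: "U \<in> carrier_mat n n" and x: "x < n * m"
  shows "reweight n m U \<psi> c $ x =
    (\<Sum>l<n. (\<Sum>k<n. U $$ (x div m, k) * complex_of_real (c k) * cnj (U $$ (l,k))) * coeff_mat n m \<psi> $$ (l, x mod m))"
proof -
  have "0 < m"
    using x by (cases m) auto
  then have ij: "x div m < n" "x mod m < m"
    using x by (auto simp: less_mult_imp_div_less)
  have "reweight n m U \<psi> c $ x = (U * real_diag_mat n c * cadj U * coeff_mat n m \<psi>) $$ (x div m, x mod m)"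
    using x by (simp add: reweight_def vec_of_coeff_mat_def)
  also have "\<dots> = (\<Sum>l<n. (U * real_diag_mat n c * cadj U) $$ (x div m, l) * coeff_mat n m \<psi> $$ (l, x mod m))"
    using U ij by (subst index_mult_mat_sum) (auto simp del: index_mult_mat(1))
  also have "\<dots> = (\<Sum>l<n. (\<Sum>k<n. U $$ (x div m, k) * complex_of_real (c k) * cnj (U $$ (l,k))) *
      coeff_mat n m \<psi> $$ (l, x mod m))"
    by (rule sum.cong[OF refl]) (subst index_real_diag_conj[OF U ij(1)], auto)
  finally show ?thesis .
qed

lemma reweight_lincomb:
  assumes U: "U \<in> carrier_mat n n"
  shows "reweight n m U \<psi> (\<lambda>i. a * c i + b * d i) =
    complex_of_real a \<cdot>\<^sub>v reweight n m U \<psi> c + complex_of_real b \<cdot>\<^sub>v reweight n m U \<psi> d"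
  using U by (intro eq_vecI)
    (simp_all add: index_reweight sum_distrib_left sum.distrib algebra_simps)

lemma reweight_scale:
  assumes U: "U \<in> carrier_mat n n"
  shows "reweight n m U \<psi> (\<lambda>i. a * c i) = complex_of_real a \<cdot>\<^sub>v reweight n m U \<psi> c"
  using U by (intro eq_vecI) (simp_all add: index_reweight sum_distrib_left algebra_simps)

lemma schmidt_gram_decomp:
  assumes gd: "gram_decomp n m (coeff_mat n m \<psi>) U e" and j: "1 \<le> j" "j \<le> n"
  shows "schmidt n m \<psi> j = sqrt (e (j - 1))"
proof -
  have "sing_vals (coeff_mat n m \<psi>) = map (\<lambda>i. sqrt (e i)) [0..<n]"
    using gd unfolding gram_decomp_def by (intro sing_vals_of_spectral) auto
  moreover have "j - 1 < n"
    using j by simp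
  ultimately show ?thesis
    by (simp add: schmidt_def)
qed

lemma schmidt_nonneg:
  assumes "1 \<le> j" "j \<le> n"
  shows "0 \<le> schmidt n m \<psi> j"
proof -
  obtain U e where gd: "gram_decomp n m (coeff_mat n m \<psi>) U e"
    using gram_decomp_exists[OF coeff_mat_carrier(1)] .
  moreover have "j - 1 < n"
    using assms by simp
  ultimately show ?thesis
    using schmidt_gram_decomp[OF gd assms] by (simp add: gram_decomp_def)
qed

lemma sum_gram_decomp_unit:
  assumes gd: "gram_decomp n m (coeff_mat n m \<psi>) U e" and unit: "unit_vec (n * m) \<psi>"
  shows "(\<Sum>i<n. e i) = 1"
proof -
  have "\<psi> \<in> carrier_vec (n * m)" "sqnorm \<psi> = 1"
    using unit by (simp_all add: unit_vec_iff_sqnorm)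
  then have "sqnorm (vec_of_coeff_mat n m (coeff_mat n m \<psi>)) = 1"
    by (simp add: vec_of_coeff_mat_coeff_mat)
  moreover have "unitary n U" "coeff_mat n m \<psi> * cadj (coeff_mat n m \<psi>) = U * real_diag_mat n e * cadj U"
    using gd by (auto simp: gram_decomp_def)
  ultimately show ?thesis
    unfolding sqnorm_vec_of_coeff_mat[OF coeff_mat_carrier(1)]
    by (simp add: sum_sq_cmod_of_spectral[OF coeff_mat_carrier(1)])
qed

lemma schmidt_reweight:
  assumes gd: "gram_decomp n m (coeff_mat n m \<psi>) U e"
    and nonneg: "\<And>i. i < n \<Longrightarrow> 0 \<le> c i"
    and sorted: "\<And>i j. i \<le> j \<Longrightarrow> j < n \<Longrightarrow> c j * sqrt (e j) \<le> c i * sqrt (e i)"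
    and j: "1 \<le> j" "j \<le> n"
  shows "schmidt n m (reweight n m U \<psi> c) j = c (j - 1) * sqrt (e (j - 1))"
proof -
  have U: "unitary n U" and e_nonneg: "\<And>i. i < n \<Longrightarrow> 0 \<le> e i"
    and eq: "coeff_mat n m \<psi> * cadj (coeff_mat n m \<psi>) = U * real_diag_mat n e * cadj U"
    using gd by (auto simp: gram_decomp_def)
  have sq: "sqrt ((c i)\<^sup>2 * e i) = c i * sqrt (e i)" if "i < n" for i
    using nonneg[OF that] e_nonneg[OF that] by (simp add: real_sqrt_mult)
  have "sing_vals (coeff_mat n m (reweight n m U \<psi> c)) = map (\<lambda>i. sqrt ((c i)\<^sup>2 * e i)) [0..<n]"
    unfolding coeff_mat_reweight[OF unitary_carrier[OF U]]
  proof (rule sing_vals_of_spectral[OF _ U gram_of_real_diag_conj_mult[OF coeff_mat_carrier(1) U eq]])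
    show "U * real_diag_mat n c * cadj U * coeff_mat n m \<psi> \<in> carrier_mat n m"
      using unitary_carrier[OF U] by (intro mult_carrier_mat[of _ n n]) auto
    show "0 \<le> (c i)\<^sup>2 * e i" if "i < n" for i
      using e_nonneg[OF that] by simp
    show "(c j)\<^sup>2 * e j \<le> (c i)\<^sup>2 * e i" if "i \<le> j" "j < n" for i j
      using power_mono[OF sorted[OF that], of 2] nonneg[of j] e_nonneg[of j] e_nonneg[of i] that
      by (simp add: power_mult_distrib)
  qed
  moreover have "j - 1 < n"
    using j by simp
  ultimately show ?thesis
    using sq[of "j - 1"] by (simp add: schmidt_def)
qed

lemma sqnorm_reweight:
  assumes gd: "gram_decomp n m (coeff_mat n m \<psi>) U e"
  shows "sqnorm (reweight n m U \<psi> c) = (\<Sum>i<n. (c i)\<^sup>2 * e i)"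
proof -
  have U: "unitary n U"
    and eq: "coeff_mat n m \<psi> * cadj (coeff_mat n m \<psi>) = U * real_diag_mat n e * cadj U"
    using gd by (auto simp: gram_decomp_def)
  have B: "U * real_diag_mat n c * cadj U * coeff_mat n m \<psi> \<in> carrier_mat n m"
    using unitary_carrier[OF U] by (intro mult_carrier_mat[of _ n n]) auto
  show ?thesis
    unfolding reweight_def sqnorm_vec_of_coeff_mat[OF B]
    by (rule sum_sq_cmod_of_spectral[OF B U gram_of_real_diag_conj_mult[OF coeff_mat_carrier(1) U eq]])
qed

lemma normalized_reweight:
  assumes gd: "gram_decomp n m (coeff_mat n m \<psi>) U e"
    and c: "\<And>i. 0 \<le> c i" "\<And>i j. i \<le> j \<Longrightarrow> c j \<le> c i"
    and N: "N = sqrt (\<Sum>i<n. (c i)\<^sup>2 * e i)" "0 < N"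
  shows "unit_vec (n * m) (complex_of_real (1 / N) \<cdot>\<^sub>v reweight n m U \<psi> c)"
    and "\<And>j. 1 \<le> j \<Longrightarrow> j \<le> n \<Longrightarrow>
      schmidt n m (complex_of_real (1 / N) \<cdot>\<^sub>v reweight n m U \<psi> c) j = c (j - 1) / N * sqrt (e (j - 1))"
proof -
  have U: "unitary n U" and e: "\<And>i. i < n \<Longrightarrow> 0 \<le> e i" "\<And>i j. i \<le> j \<Longrightarrow> j < n \<Longrightarrow> e j \<le> e i"
    using gd by (auto simp: gram_decomp_def)
  have "(\<Sum>i<n. (c i)\<^sup>2 * e i) = N\<^sup>2"
    using N e(1) by (simp add: sum_nonneg)
  then show "unit_vec (n * m) (complex_of_real (1 / N) \<cdot>\<^sub>v reweight n m U \<psi> c)"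
    using N(2) by (simp add: unit_vec_iff_sqnorm sqnorm_smult sqnorm_reweight[OF gd] norm_divide power_divide)
  have \<phi>: "complex_of_real (1 / N) \<cdot>\<^sub>v reweight n m U \<psi> c = reweight n m U \<psi> (\<lambda>i. 1 / N * c i)"
    by (rule reweight_scale[OF unitary_carrier[OF U], symmetric])
  show "schmidt n m (complex_of_real (1 / N) \<cdot>\<^sub>v reweight n m U \<psi> c) j = c (j - 1) / N * sqrt (e (j - 1))"
    if "1 \<le> j" "j \<le> n" for j
    unfolding \<phi>
  proof (rule schmidt_reweight[OF gd _ _ that, THEN trans])
    show "0 \<le> 1 / N * c i" for i
      using N(2) c(1)[of i] by simp
    show "1 / N * c j * sqrt (e j) \<le> 1 / N * c i * sqrt (e i)" if ij: "i \<le> j" "j < n" for i j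
    proof -
      have "c j * sqrt (e j) \<le> c i * sqrt (e i)"
        using ij e(1)[of j] e(2)[OF ij] c(1)[of j] c(2)[OF ij(1)] by (intro mult_mono) auto
      then show ?thesis
        using N(2) by (simp add: divide_right_mono)
    qed
  qed simp
qed

section \<open>Admissible vectors and monotonicity in the rank parameter\<close>

lemma admissible_iff:
  "\<psi> \<in> admissible n m \<alpha> \<longleftrightarrow> unit_vec (n * m) \<psi> \<and>
     (\<forall>j. nat \<lceil>\<alpha>\<rceil> + 1 \<le> j \<and> j \<le> min n m \<longrightarrow> schmidt n m \<psi> j = 0) \<and>
     (\<alpha> - real (nat \<lfloor>\<alpha>\<rfloor>) > 0 \<longrightarrow> schmidt n m \<psi> (nat \<lfloor>\<alpha>\<rfloor> + 1) \<le>
        (\<alpha> - real (nat \<lfloor>\<alpha>\<rfloor>)) / real (nat \<lfloor>\<alpha>\<rfloor>) * (\<Sum>j = 1..nat \<lfloor>\<alpha>\<rfloor>. schmidt n m \<psi> j))"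
  unfolding admissible_def Let_def by simp

lemma admissible_nat_iff:
  "\<psi> \<in> admissible n m (real k) \<longleftrightarrow>
     unit_vec (n * m) \<psi> \<and> (\<forall>j. k + 1 \<le> j \<and> j \<le> min n m \<longrightarrow> schmidt n m \<psi> j = 0)"
  unfolding admissible_iff by simp

lemma admissible_frac_iff:
  assumes "0 < \<theta>" "\<theta> < 1"
  shows "\<psi> \<in> admissible n m (real k + \<theta>) \<longleftrightarrow>
     unit_vec (n * m) \<psi> \<and> (\<forall>j. k + 2 \<le> j \<and> j \<le> min n m \<longrightarrow> schmidt n m \<psi> j = 0) \<and>
     schmidt n m \<psi> (k + 1) \<le> \<theta> / real k * (\<Sum>j = 1..k. schmidt n m \<psi> j)"
proof -
  have "\<lfloor>real k + \<theta>\<rfloor> = int k" "\<lceil>real k + \<theta>\<rceil> = int k + 1"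
    using assms by (simp_all add: floor_unique ceiling_unique)
  then have "nat \<lfloor>real k + \<theta>\<rfloor> = k" "nat \<lceil>real k + \<theta>\<rceil> = k + 1"
    by (simp_all add: nat_add_distrib)
  then show ?thesis
    unfolding admissible_iff using assms by (simp add: numeral_2_eq_2)
qed

lemma nat_ceiling_eq_nat_floor:
  fixes x :: real
  assumes "0 \<le> x"
  shows "nat \<lceil>x\<rceil> = (if x - real (nat \<lfloor>x\<rfloor>) > 0 then nat \<lfloor>x\<rfloor> + 1 else nat \<lfloor>x\<rfloor>)"
proof -
  have fl: "real (nat \<lfloor>x\<rfloor>) = real_of_int \<lfloor>x\<rfloor>"
    using assms by simp
  show ?thesis
  proof (cases "x - real (nat \<lfloor>x\<rfloor>) > 0")
    case True
    then have "\<lceil>x\<rceil> = \<lfloor>x\<rfloor> + 1"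
      unfolding fl by (intro ceiling_unique) linarith+
    then show ?thesis
      using True assms by (simp add: nat_add_distrib)
  next
    case False
    then have "x = real_of_int \<lfloor>x\<rfloor>"
      unfolding fl by linarith
    then have "\<lceil>x\<rceil> = \<lfloor>x\<rfloor>"
      by (metis ceiling_of_int)
    then show ?thesis
      using False by simp
  qed
qed

lemma admissible_mono:
  assumes \<alpha>: "1 \<le> \<alpha>" and \<alpha>\<beta>: "\<alpha> \<le> \<beta>" and \<beta>: "\<beta> \<le> real (min n m)"
  shows "admissible n m \<alpha> \<subseteq> admissible n m \<beta>"
proof
  fix \<psi> assume \<psi>: "\<psi> \<in> admissible n m \<alpha>"
  define a b s where "a = nat \<lfloor>\<alpha>\<rfloor>" and "b = nat \<lfloor>\<beta>\<rfloor>" and "s = schmidt n m \<psi>"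
  have unit: "unit_vec (n * m) \<psi>"
    and zero: "\<And>j. nat \<lceil>\<alpha>\<rceil> + 1 \<le> j \<Longrightarrow> j \<le> min n m \<Longrightarrow> s j = 0"
    and tail: "\<alpha> - real a > 0 \<Longrightarrow> s (a + 1) \<le> (\<alpha> - real a) / real a * (\<Sum>j = 1..a. s j)"
    using \<psi> unfolding admissible_iff a_def s_def by auto
  have ceil_\<alpha>: "nat \<lceil>\<alpha>\<rceil> = (if \<alpha> - real a > 0 then a + 1 else a)"
    and ceil_\<beta>: "nat \<lceil>\<beta>\<rceil> = (if \<beta> - real b > 0 then b + 1 else b)"
    using \<alpha> \<alpha>\<beta> unfolding a_def b_def by (simp_all add: nat_ceiling_eq_nat_floor)
  have "a \<le> b"
    unfolding a_def b_def using \<alpha>\<beta> by (intro nat_mono floor_mono)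
  have "(1::int) \<le> \<lfloor>\<beta>\<rfloor>"
    using \<alpha> \<alpha>\<beta> by (simp add: one_le_floor)
  then have "1 \<le> b"
    unfolding b_def by arith
  have "nat \<lceil>\<alpha>\<rceil> \<le> nat \<lceil>\<beta>\<rceil>"
    using \<alpha>\<beta> by (intro nat_mono ceiling_mono)
  have "nat \<lceil>\<beta>\<rceil> \<le> min n m"
    using \<beta> by (simp add: nat_le_iff ceiling_le_iff min_def split: if_splits)
  then have zero_\<beta>: "s j = 0" if "nat \<lceil>\<beta>\<rceil> + 1 \<le> j" "j \<le> min n m" for j
    using zero[of j] that \<open>nat \<lceil>\<alpha>\<rceil> \<le> nat \<lceil>\<beta>\<rceil>\<close> by simp
  have tail_\<beta>: "s (b + 1) \<le> (\<beta> - real b) / real b * (\<Sum>j = 1..b. s j)" if \<theta>: "\<beta> - real b > 0"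
  proof -
    have "b + 1 \<le> min n m"
      using \<open>nat \<lceil>\<beta>\<rceil> \<le> min n m\<close> ceil_\<beta> \<theta> by simp
    have sum_schmidt_nonneg: "0 \<le> (\<Sum>j = 1..b. s j)"
      using \<open>b + 1 \<le> min n m\<close> unfolding s_def by (intro sum_nonneg schmidt_nonneg) auto
    then have rhs_nonneg: "0 \<le> (\<beta> - real b) / real b * (\<Sum>j = 1..b. s j)"
      using \<theta> by simp
    show ?thesis
    proof (cases "s (b + 1) = 0")
      case False
      then have "\<not> nat \<lceil>\<alpha>\<rceil> + 1 \<le> b + 1"
        using zero[OF _ \<open>b + 1 \<le> min n m\<close>] by blast
      then have ab: "a = b" "\<alpha> - real a > 0"
        using ceil_\<alpha> \<open>a \<le> b\<close> by (auto split: if_splits)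
      have "s (b + 1) \<le> (\<alpha> - real a) / real a * (\<Sum>j = 1..a. s j)"
        using tail ab by simp
      also have "\<dots> \<le> (\<beta> - real b) / real b * (\<Sum>j = 1..b. s j)"
      proof -
        have "(\<alpha> - real b) / real b \<le> (\<beta> - real b) / real b"
          using \<alpha>\<beta> by (simp add: divide_right_mono)
        then show ?thesis
          unfolding ab(1) by (rule mult_right_mono[OF _ sum_schmidt_nonneg])
      qed
      finally show ?thesis .
    qed (use rhs_nonneg in simp)
  qed
  show "\<psi> \<in> admissible n m \<beta>"
    unfolding admissible_iff using unit zero_\<beta> tail_\<beta> unfolding b_def s_def by blast
qed

lemma K_cone_mono:
  assumes "1 \<le> \<alpha>" "\<alpha> \<le> \<beta>" "\<beta> \<le> real (min n m)"
  shows "K_cone n m \<alpha> \<subseteq> K_cone n m \<beta>"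
proof -
  have "cone_gen n m \<alpha> \<subseteq> cone_gen n m \<beta>"
    using admissible_mono[OF assms] unfolding cone_gen_def by blast
  then show ?thesis
    unfolding K_cone_def mat_closure_def by blast
qed

lemma P_set_antimono:
  "1 \<le> \<alpha> \<Longrightarrow> \<alpha> \<le> \<beta> \<Longrightarrow> \<beta> \<le> real (min n m) \<Longrightarrow> P_set n m \<beta> \<subseteq> P_set n m \<alpha>"
  unfolding P_set_def using admissible_mono[of \<alpha> \<beta> n m] by blast

lemma admissible_min: "admissible n m (real (min n m)) = {\<psi>. unit_vec (n * m) \<psi>}"
  unfolding admissible_def Let_def by auto

section \<open>Positive semidefinite matrices lie in the largest cone\<close>

lemma qform_two_entries:
  assumes ab: "a < N" "b < N" "a \<noteq> b"
  shows "qform C (vec N (\<lambda>x. if x = a then p else if x = b then q else 0)) =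
    cnj p * C $$ (a,a) * p + cnj p * C $$ (a,b) * q + cnj q * C $$ (b,a) * p + cnj q * C $$ (b,b) * q"
proof -
  define v where "v = vec N (\<lambda>x. if x = a then p else if x = b then q else 0)"
  have "qform C v = (\<Sum>x\<in>{a,b}. \<Sum>y<N. cnj (v $ x) * C $$ (x,y) * v $ y)"
    unfolding qform_def dim_vec[of N] v_def using ab by (intro sum.mono_neutral_right) auto
  also have "\<dots> = (\<Sum>x\<in>{a,b}. \<Sum>y\<in>{a,b}. cnj (v $ x) * C $$ (x,y) * v $ y)"
    using ab by (intro sum.cong refl sum.mono_neutral_right) (auto simp: v_def)
  finally show ?thesis
    using ab by (simp add: v_def algebra_simps)
qed

lemma qform_unit_vec:
  assumes a: "a < N"
  shows "qform C (Matrix.unit_vec N a) = C $$ (a,a)"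
proof -
  let ?v = "Matrix.unit_vec N a"
  have "qform C ?v = (\<Sum>x\<in>{a}. \<Sum>y<N. cnj (?v $ x) * C $$ (x,y) * ?v $ y)"
    unfolding qform_def index_unit_vec(3) using a by (intro sum.mono_neutral_right) auto
  also have "\<dots> = (\<Sum>x\<in>{a}. \<Sum>y\<in>{a}. cnj (?v $ x) * C $$ (x,y) * ?v $ y)"
    using a by (intro sum.cong refl sum.mono_neutral_right) auto
  finally show ?thesis
    using a by simp
qed

lemma psd_hermitian:
  assumes "psd N \<rho>"
  shows "cadj \<rho> = \<rho>"
proof -
  have \<rho>: "\<rho> \<in> carrier_mat N N" and nonneg: "\<And>v. v \<in> carrier_vec N \<Longrightarrow> nonneg_real (qform \<rho> v)"
    using assms unfolding psd_def by auto
  have diag: "Im (\<rho> $$ (a,a)) = 0" if "a < N" for a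
    using nonneg[of "Matrix.unit_vec N a"] qform_unit_vec[OF that, of \<rho>] by (auto simp: nonneg_real_def)
  have off_diag: "\<rho> $$ (b,a) = cnj (\<rho> $$ (a,b))" if ab: "a < N" "b < N" "a \<noteq> b" for a b
  proof -
    have "Im (qform \<rho> (vec N (\<lambda>x. if x = a then p else if x = b then 1 else 0))) = 0" for p
      using nonneg[of "vec N (\<lambda>x. if x = a then p else if x = b then 1 else 0)"] by (auto simp: nonneg_real_def)
    from this[of 1] this[of "\<i>"] show ?thesis
      unfolding qform_two_entries[OF ab] using diag[OF ab(1)] diag[OF ab(2)] by (simp add: complex_eq_iff)
  qed
  show ?thesis
  proof (rule eq_matI)
    fix i j assume "i < dim_row \<rho>" "j < dim_col \<rho>"
    then have ij: "i < N" "j < N"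
      using \<rho> by auto
    show "cadj \<rho> $$ (i,j) = \<rho> $$ (i,j)"
      using ij \<rho> diag[of i] off_diag[of i j] by (cases "i = j") (auto simp: complex_eq_iff)
  qed (use \<rho> in auto)
qed

lemma qform_col_spectral:
  assumes U: "unitary N U" and \<rho>: "\<rho> = U * real_diag_mat N e * cadj U" and k: "k < N"
  shows "qform \<rho> (col U k) = complex_of_real (e k)"
proof -
  have Uc: "U \<in> carrier_mat N N" and UU: "cadj U * U = 1\<^sub>m N"
    using U by (auto simp: unitary_def)
  have \<rho>c: "\<rho> \<in> carrier_mat N N"
    unfolding \<rho> using Uc by simp
  have "cadj U * \<rho> * U = (cadj U * U) * real_diag_mat N e * (cadj U * U)"
    unfolding \<rho> using Uc
    by (simp add: assoc_mult_mat[of _ N N _ N _ N] mult_carrier_mat[of _ N N _ N])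
  then have "(cadj U * \<rho> * U) $$ (k,k) = complex_of_real (e k)"
    using k Uc by (simp add: UU)
  moreover have "(cadj U * \<rho> * U) $$ (k,k) = (\<Sum>x<N. (\<Sum>y<N. cnj (U $$ (y,k)) * \<rho> $$ (y,x)) * U $$ (x,k))"
    using k Uc \<rho>c by (simp del: index_mult_mat(1) add: index_mult_mat_sum)
  moreover have "\<dots> = qform \<rho> (col U k)"
    unfolding qform_def using Uc k
    by (simp add: sum_distrib_right, subst sum.swap) (auto intro!: sum.cong)
  ultimately show ?thesis
    by simp
qed

lemma psd_in_K_cone_min:
  assumes psd: "psd (n * m) \<rho>"
  shows "\<rho> \<in> K_cone n m (real (min n m))"
proof -
  define N where "N = n * m"
  have \<rho>: "\<rho> \<in> carrier_mat N N" "cadj \<rho> = \<rho>"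
    using psd psd_hermitian[OF psd] unfolding psd_def N_def by auto
  obtain U e where U: "unitary N U" and eq: "\<rho> = U * real_diag_mat N e * cadj U"
    using hermitian_spectral[OF \<rho>] by blast
  have Uc: "U \<in> carrier_mat N N"
    using U by (rule unitary_carrier)
  have "0 \<le> e k \<and> col U k \<in> admissible n m (real (min n m))" if k: "k < N" for k
  proof
    have "nonneg_real (qform \<rho> (col U k))"
      using psd Uc k unfolding psd_def N_def by auto
    then show "0 \<le> e k"
      using qform_col_spectral[OF U eq k] by (simp add: nonneg_real_def)
    show "col U k \<in> admissible n m (real (min n m))"
      using Uc k sqnorm_col_unitary[OF U k]
      unfolding admissible_min unit_vec_def N_def by auto
  qed
  moreover have "\<rho> = mat N N (\<lambda>(x,y). \<Sum>i<N. complex_of_real (e i) * outer (col U i) $$ (x,y))"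
  proof (rule eq_matI)
    fix x y assume "x < dim_row (mat N N (\<lambda>(x,y). \<Sum>i<N. complex_of_real (e i) * outer (col U i) $$ (x,y)))"
      "y < dim_col (mat N N (\<lambda>(x,y). \<Sum>i<N. complex_of_real (e i) * outer (col U i) $$ (x,y)))"
    then have xy: "x < N" "y < N"
      by auto
    show "\<rho> $$ (x,y) = mat N N (\<lambda>(x,y). \<Sum>i<N. complex_of_real (e i) * outer (col U i) $$ (x,y)) $$ (x,y)"
      unfolding eq index_real_diag_conj[OF Uc xy] using xy Uc
      by (auto simp: outer_def intro!: sum.cong)
  qed (use \<rho> in auto)
  ultimately have "\<rho> \<in> cone_gen n m (real (min n m))"
    unfolding cone_gen_def N_def by blast
  then show ?thesis
    using \<rho> unfolding K_cone_def mat_closure_def N_def by force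
qed

section \<open>Closedness of the cones at integer ranks\<close>

lemma renormalize_close:
  assumes dims: "dim_vec p = dim_vec \<psi>" "dim_vec q = dim_vec \<psi>" and \<psi>: "\<psi> = p + q"
    and p: "sqnorm p = 1 - \<eta>" and q: "sqnorm q = \<eta>" and \<eta>: "\<eta> < 1"
    and x: "x < dim_vec \<psi>"
  shows "cmod (\<psi> $ x - (complex_of_real (1 / sqrt (1 - \<eta>)) \<cdot>\<^sub>v p) $ x) \<le> sqrt \<eta> + \<eta>"
proof -
  define N where "N = sqrt (1 - \<eta>)"
  have \<eta>0: "0 \<le> \<eta>"
    using q sqnorm_nonneg[of q] by simp
  have N: "0 < N" "N \<le> 1" "N\<^sup>2 = 1 - \<eta>"
    using \<eta> \<eta>0 by (auto simp: N_def)
  have t: "0 \<le> 1 / N - 1"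
    using N by simp
  have "\<psi> $ x - (complex_of_real (1 / N) \<cdot>\<^sub>v p) $ x = q $ x - p $ x * complex_of_real (1 / N - 1)"
    unfolding \<psi> using dims x by (simp add: algebra_simps)
  then have "cmod (\<psi> $ x - (complex_of_real (1 / N) \<cdot>\<^sub>v p) $ x) \<le>
      cmod (q $ x) + cmod (p $ x * complex_of_real (1 / N - 1))"
    by (simp only: norm_triangle_ineq4)
  also have "cmod (p $ x * complex_of_real (1 / N - 1)) = cmod (p $ x) * (1 / N - 1)"
    using t by (simp only: norm_mult norm_of_real abs_of_nonneg)
  also have "cmod (q $ x) + cmod (p $ x) * (1 / N - 1) \<le> sqrt \<eta> + N * (1 / N - 1)"
  proof (intro add_mono mult_right_mono)
    show "cmod (q $ x) \<le> sqrt \<eta>"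
      using index_le_sqnorm[of x q] dims x q by simp
    show "cmod (p $ x) \<le> N"
      using index_le_sqnorm[of x p] dims x p unfolding N_def by simp
  qed (rule t)
  also have "N * (1 / N - 1) = 1 - N"
    using N by (simp add: field_simps)
  also have "1 - N \<le> 1 - N\<^sup>2"
    using mult_right_mono[OF N(2), of N] N(1) by (simp add: power2_eq_square)
  finally show ?thesis
    using N(3) by (simp add: N_def[symmetric])
qed

lemma outer_diff_le:
  assumes dims: "dim_vec \<phi> = dim_vec \<psi>" and unit: "sqnorm \<psi> = 1" "sqnorm \<phi> = 1"
    and close: "\<And>x. x < dim_vec \<psi> \<Longrightarrow> cmod (\<psi> $ x - \<phi> $ x) \<le> \<epsilon>"
    and xy: "x < dim_vec \<psi>" "y < dim_vec \<psi>"
  shows "cmod (outer \<psi> $$ (x,y) - outer \<phi> $$ (x,y)) \<le> 2 * \<epsilon>"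
proof -
  have "outer \<psi> $$ (x,y) - outer \<phi> $$ (x,y) = (\<psi> $ x - \<phi> $ x) * cnj (\<psi> $ y) + \<phi> $ x * cnj (\<psi> $ y - \<phi> $ y)"
    using dims xy by (simp add: outer_def algebra_simps)
  then have "cmod (outer \<psi> $$ (x,y) - outer \<phi> $$ (x,y)) \<le>
      cmod (\<psi> $ x - \<phi> $ x) * cmod (\<psi> $ y) + cmod (\<phi> $ x) * cmod (\<psi> $ y - \<phi> $ y)"
    by (metis complex_mod_cnj norm_mult norm_triangle_ineq)
  also have "\<dots> \<le> \<epsilon> * 1 + 1 * \<epsilon>"
    using close[OF xy(1)] close[OF xy(2)] index_le_sqnorm[of y \<psi>] index_le_sqnorm[of x \<phi>] dims unit xy
      order_trans[OF norm_ge_zero close[OF xy(1)]]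
    by (intro add_mono mult_mono) auto
  finally show ?thesis
    by simp
qed

lemma gram_decomp_of_admissible_frac:
  assumes k: "1 \<le> k" "k < min n m" and \<theta>: "0 < \<theta>" "\<theta> < 1"
    and \<psi>: "\<psi> \<in> admissible n m (real k + \<theta>)" and gd: "gram_decomp n m (coeff_mat n m \<psi>) U e"
  shows "\<And>i. k + 1 \<le> i \<Longrightarrow> i < n \<Longrightarrow> e i = 0" and "sqrt (e k) \<le> \<theta>"
proof -
  have unit: "unit_vec (n * m) \<psi>"
    and zero: "\<And>j. k + 2 \<le> j \<Longrightarrow> j \<le> min n m \<Longrightarrow> schmidt n m \<psi> j = 0"
    and tail: "schmidt n m \<psi> (k + 1) \<le> \<theta> / real k * (\<Sum>j = 1..k. schmidt n m \<psi> j)"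
    using \<psi> unfolding admissible_frac_iff[OF \<theta>] by auto
  have e: "\<And>i. i < n \<Longrightarrow> 0 \<le> e i" "\<And>i. m \<le> i \<Longrightarrow> i < n \<Longrightarrow> e i = 0"
    using gd by (auto simp: gram_decomp_def)
  have schmidt: "schmidt n m \<psi> j = sqrt (e (j - 1))" if "1 \<le> j" "j \<le> n" for j
    using schmidt_gram_decomp[OF gd that] .
  show "e i = 0" if i: "k + 1 \<le> i" "i < n" for i
  proof (cases "i < m")
    case True
    then have "sqrt (e i) = 0"
      using zero[of "i + 1"] schmidt[of "i + 1"] i by simp
    then show ?thesis
      using e(1)[OF i(2)] by simp
  qed (use e(2) i in simp)
  have e_le_1: "e i \<le> 1" if "i < n" for i
    using member_le_sum[of i "{..<n}" e] e(1) sum_gram_decomp_unit[OF gd unit] that by simp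
  have "(\<Sum>j = 1..k. schmidt n m \<psi> j) \<le> (\<Sum>j = 1..k. 1)"
  proof (rule sum_mono)
    fix j assume j: "j \<in> {1..k}"
    then have "j - 1 < n"
      using k by auto
    then show "schmidt n m \<psi> j \<le> 1"
      using j k e_le_1 schmidt[of j] by simp
  qed
  then have "(\<Sum>j = 1..k. schmidt n m \<psi> j) \<le> real k"
    by simp
  then have "\<theta> / real k * (\<Sum>j = 1..k. schmidt n m \<psi> j) \<le> \<theta>"
    using k \<theta> by (simp add: field_simps)
  then show "sqrt (e k) \<le> \<theta>"
    using tail schmidt[of "k + 1"] k by simp
qed

lemma admissible_truncation:
  assumes k: "1 \<le> k" "k < min n m" and \<theta>: "0 < \<theta>" "\<theta> < 1"
    and \<psi>: "\<psi> \<in> admissible n m (real k + \<theta>)"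
  obtains \<phi> where "\<phi> \<in> admissible n m (real k)" "\<And>x. x < n * m \<Longrightarrow> cmod (\<psi> $ x - \<phi> $ x) \<le> 2 * \<theta>"
proof -
  have unit: "\<psi> \<in> carrier_vec (n * m)" "sqnorm \<psi> = 1"
    using \<psi> unfolding admissible_frac_iff[OF \<theta>] unit_vec_iff_sqnorm by auto
  obtain U e where gd: "gram_decomp n m (coeff_mat n m \<psi>) U e"
    using gram_decomp_exists[OF coeff_mat_carrier(1)] .
  have U: "unitary n U" and e_nonneg: "\<And>i. i < n \<Longrightarrow> 0 \<le> e i"
    using gd by (auto simp: gram_decomp_def)
  note tail = gram_decomp_of_admissible_frac[OF k \<theta> \<psi> gd]
  have "k < n"
    using k by simp
  have sum1: "(\<Sum>i<n. e i) = 1"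
    using sum_gram_decomp_unit[OF gd] unit by (simp add: unit_vec_iff_sqnorm)
  define c where "c = (\<lambda>i::nat. if i < k then (1::real) else 0)"
  have sum_c: "(\<Sum>i<n. c i * e i) = 1 - e k"
  proof -
    have "(\<Sum>i<n. (1 - c i) * e i) = (\<Sum>i\<in>{k}. (1 - c i) * e i)"
      using \<open>k < n\<close> tail(1) by (intro sum.mono_neutral_right) (auto simp: c_def)
    moreover have "c k = 0"
      by (simp add: c_def)
    ultimately have "(\<Sum>i<n. e i) = (\<Sum>i<n. c i * e i) + e k"
      by (simp add: left_diff_distrib sum_subtractf)
    then show ?thesis
      using sum1 by simp
  qed
  define \<eta> where "\<eta> = e k"
  have \<eta>: "sqrt \<eta> \<le> \<theta>" "0 \<le> \<eta>"
    using tail(2) e_nonneg[OF \<open>k < n\<close>] unfolding \<eta>_def by auto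
  have "\<eta> = (sqrt \<eta>)\<^sup>2"
    using \<eta>(2) by simp
  also have "\<dots> \<le> \<theta>\<^sup>2"
    using \<eta> by (intro power_mono) auto
  also have "\<dots> \<le> \<theta>"
    using \<theta> by (simp add: power2_eq_square mult_left_le)
  finally have "\<eta> \<le> \<theta>" .
  then have "\<eta> < 1"
    using \<theta> by simp
  define p q where "p = reweight n m U \<psi> c" and "q = reweight n m U \<psi> (\<lambda>i. 1 - c i)"
  have c_sq: "(c i)\<^sup>2 = c i" "(1 - c i)\<^sup>2 = 1 - c i" for i
    by (simp_all add: c_def)
  have p: "sqnorm p = 1 - \<eta>"
    using sum_c unfolding p_def sqnorm_reweight[OF gd] \<eta>_def c_sq .
  have q: "sqnorm q = \<eta>"
    using sum_c sum1 unfolding q_def sqnorm_reweight[OF gd] \<eta>_def c_sq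
    by (simp add: sum_subtractf left_diff_distrib)
  have "reweight n m U \<psi> (\<lambda>_. 1) = p + q"
    using reweight_lincomb[OF unitary_carrier[OF U], of m \<psi> 1 c 1 "\<lambda>i. 1 - c i"]
    unfolding p_def q_def by simp
  then have \<psi>_pq: "\<psi> = p + q"
    using reweight_one[OF U unit(1)] by simp
  define \<phi> where "\<phi> = complex_of_real (1 / sqrt (1 - \<eta>)) \<cdot>\<^sub>v p"
  have N: "sqrt (1 - \<eta>) = sqrt (\<Sum>i<n. (c i)\<^sup>2 * e i)" "0 < sqrt (1 - \<eta>)"
    using sum_c \<open>\<eta> < 1\<close> by (simp_all add: c_sq \<eta>_def)
  have c: "0 \<le> c i" "i \<le> j \<Longrightarrow> c j \<le> c i" for i j
    by (auto simp: c_def)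
  have "\<phi> \<in> admissible n m (real k)"
    unfolding admissible_nat_iff \<phi>_def p_def using normalized_reweight[OF gd c N] by (auto simp: c_def)
  moreover have "cmod (\<psi> $ x - \<phi> $ x) \<le> 2 * \<theta>" if "x < n * m" for x
  proof -
    have "dim_vec p = dim_vec \<psi>" "dim_vec q = dim_vec \<psi>" "x < dim_vec \<psi>"
      using unit that by (auto simp: p_def q_def)
    then have "cmod (\<psi> $ x - \<phi> $ x) \<le> sqrt \<eta> + \<eta>"
      unfolding \<phi>_def using renormalize_close[OF _ _ \<psi>_pq p q \<open>\<eta> < 1\<close>] by simp
    then show ?thesis
      using \<eta> \<open>\<eta> \<le> \<theta>\<close> by simp
  qed
  ultimately show thesis
    by (rule that)
qed

lemma trace_cone_gen:
  fixes M :: nat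
  assumes unit: "\<And>i. i < M \<Longrightarrow> unit_vec N (\<psi> i)"
  shows "(\<Sum>x<N. mat N N (\<lambda>(x,y). \<Sum>i<M. complex_of_real (c i) * outer (\<psi> i) $$ (x,y)) $$ (x,x)) =
    complex_of_real (\<Sum>i<M. c i)"
proof -
  have dim: "dim_vec (\<psi> i) = N" if "i < M" for i
    using unit[OF that] by (simp add: unit_vec_def)
  have "(\<Sum>x<N. mat N N (\<lambda>(x,y). \<Sum>i<M. complex_of_real (c i) * outer (\<psi> i) $$ (x,y)) $$ (x,x)) =
      (\<Sum>x<N. \<Sum>i<M. complex_of_real (c i) * (\<psi> i $ x * cnj (\<psi> i $ x)))"
    using dim by (simp add: outer_def)
  also have "\<dots> = (\<Sum>i<M. complex_of_real (c i) * complex_of_real (\<Sum>x<N. (cmod (\<psi> i $ x))\<^sup>2))"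
    by (subst sum.swap) (simp add: sum_distrib_left complex_norm_square del: of_real_power)
  also have "\<dots> = complex_of_real (\<Sum>i<M. c i)"
    using unit by (simp add: unit_vec_def del: of_real_power)
  finally show ?thesis .
qed

lemma cone_gen_truncation:
  assumes k: "1 \<le> k" "k < min n m" and \<theta>: "0 < \<theta>" "\<theta> < 1"
    and \<sigma>': "\<sigma>' \<in> cone_gen n m (real k + \<theta>)"
  obtains \<sigma> where "\<sigma> \<in> cone_gen n m (real k)"
    "\<And>x y. x < n * m \<Longrightarrow> y < n * m \<Longrightarrow>
       cmod (\<sigma>' $$ (x,y) - \<sigma> $$ (x,y)) \<le> 4 * \<theta> * Re (\<Sum>x<n * m. \<sigma>' $$ (x,x))"
proof -
  obtain M :: nat and c \<psi> where c\<psi>: "\<forall>i<M. 0 \<le> c i \<and> \<psi> i \<in> admissible n m (real k + \<theta>)"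
    and \<sigma>'_eq: "\<sigma>' = mat (n * m) (n * m) (\<lambda>(x,y). \<Sum>i<M. complex_of_real (c i) * outer (\<psi> i) $$ (x,y))"
    using \<sigma>' unfolding cone_gen_def mem_Collect_eq by blast
  have "\<forall>i. \<exists>\<phi>. i < M \<longrightarrow> \<phi> \<in> admissible n m (real k) \<and> (\<forall>x<n * m. cmod (\<psi> i $ x - \<phi> $ x) \<le> 2 * \<theta>)"
    using admissible_truncation[OF k \<theta>] c\<psi> by metis
  then obtain \<phi> where \<phi>: "\<And>i. i < M \<Longrightarrow> \<phi> i \<in> admissible n m (real k)"
    "\<And>i x. i < M \<Longrightarrow> x < n * m \<Longrightarrow> cmod (\<psi> i $ x - \<phi> i $ x) \<le> 2 * \<theta>"
    by metis
  have unit: "unit_vec (n * m) (\<psi> i)" "unit_vec (n * m) (\<phi> i)" if "i < M" for i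
    using c\<psi> \<phi>(1)[OF that] that unfolding admissible_iff by auto
  have outer_close: "cmod (outer (\<psi> i) $$ (x,y) - outer (\<phi> i) $$ (x,y)) \<le> 4 * \<theta>"
    if i: "i < M" and xy: "x < n * m" "y < n * m" for i x y
  proof -
    have "dim_vec (\<psi> i) = n * m" "dim_vec (\<phi> i) = n * m" "sqnorm (\<psi> i) = 1" "sqnorm (\<phi> i) = 1"
      using unit[OF i] by (auto simp: unit_vec_iff_sqnorm)
    then show ?thesis
      using outer_diff_le[of "\<phi> i" "\<psi> i" "2 * \<theta>" x y] \<phi>(2)[OF i] xy by simp
  qed
  define \<sigma> where "\<sigma> = mat (n * m) (n * m) (\<lambda>(x,y). \<Sum>i<M. complex_of_real (c i) * outer (\<phi> i) $$ (x,y))"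
  have "\<forall>i<M. 0 \<le> c i \<and> \<phi> i \<in> admissible n m (real k)"
    using c\<psi> \<phi>(1) by blast
  then have \<sigma>: "\<sigma> \<in> cone_gen n m (real k)"
    unfolding cone_gen_def \<sigma>_def mem_Collect_eq by (intro exI[of _ M] exI[of _ c] exI[of _ \<phi>]) simp
  have trace: "(\<Sum>x<n * m. \<sigma>' $$ (x,x)) = complex_of_real (\<Sum>i<M. c i)"
    unfolding \<sigma>'_eq by (rule trace_cone_gen) (use unit in auto)
  have "cmod (\<sigma>' $$ (x,y) - \<sigma> $$ (x,y)) \<le> 4 * \<theta> * Re (\<Sum>x<n * m. \<sigma>' $$ (x,x))"
    if xy: "x < n * m" "y < n * m" for x y
  proof -
    have "\<sigma>' $$ (x,y) - \<sigma> $$ (x,y) = (\<Sum>i<M. complex_of_real (c i) * (outer (\<psi> i) $$ (x,y) - outer (\<phi> i) $$ (x,y)))"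
      unfolding \<sigma>'_eq \<sigma>_def using xy by (simp add: sum_subtractf algebra_simps)
    also have "cmod \<dots> \<le> (\<Sum>i<M. cmod (complex_of_real (c i) * (outer (\<psi> i) $$ (x,y) - outer (\<phi> i) $$ (x,y))))"
      by (rule norm_sum)
    also have "\<dots> \<le> (\<Sum>i<M. c i * (4 * \<theta>))"
    proof (rule sum_mono)
      fix i assume "i \<in> {..<M}"
      then have "i < M" "0 \<le> c i"
        using c\<psi> by auto
      then show "cmod (complex_of_real (c i) * (outer (\<psi> i) $$ (x,y) - outer (\<phi> i) $$ (x,y))) \<le> c i * (4 * \<theta>)"
        using outer_close[OF _ xy] by (simp add: norm_mult mult_left_mono)
    qed
    also have "\<dots> = 4 * \<theta> * Re (\<Sum>x<n * m. \<sigma>' $$ (x,x))"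
      unfolding trace by (simp add: sum_distrib_right mult.commute)
    finally show ?thesis .
  qed
  with \<sigma> show thesis
    by (rule that)
qed

lemma Re_trace_le_of_close:
  assumes close: "\<And>x. x < N \<Longrightarrow> cmod (\<rho> $$ (x,x) - \<sigma> $$ (x,x)) < 1"
  shows "Re (\<Sum>x<N. \<sigma> $$ (x,x)) \<le> (\<Sum>x<N. cmod (\<rho> $$ (x,x))) + real N"
proof -
  have "Re (\<Sum>x<N. \<sigma> $$ (x,x)) \<le> (\<Sum>x<N. cmod (\<sigma> $$ (x,x)))"
    by (rule order_trans[OF complex_Re_le_cmod norm_sum])
  also have "\<dots> \<le> (\<Sum>x<N. cmod (\<rho> $$ (x,x)) + 1)"
  proof (rule sum_mono)
    fix x assume "x \<in> {..<N}"
    then have "cmod (\<rho> $$ (x,x) - \<sigma> $$ (x,x)) < 1"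
      using close by simp
    moreover have "cmod (\<sigma> $$ (x,x)) \<le> cmod (\<rho> $$ (x,x)) + cmod (\<rho> $$ (x,x) - \<sigma> $$ (x,x))"
      using norm_triangle_ineq2[of "\<sigma> $$ (x,x)" "\<rho> $$ (x,x)"] by (simp add: norm_minus_commute)
    ultimately show "cmod (\<sigma> $$ (x,x)) \<le> cmod (\<rho> $$ (x,x)) + 1"
      by simp
  qed
  finally show ?thesis
    by (simp add: sum.distrib)
qed

lemma K_cone_nat_of_frac:
  assumes k: "1 \<le> k" "k < min n m"
    and frac: "\<And>\<theta>. 0 < \<theta> \<Longrightarrow> \<theta> < 1 \<Longrightarrow> \<rho> \<in> K_cone n m (real k + \<theta>)"
  shows "\<rho> \<in> K_cone n m (real k)"
proof -
  define N where "N = n * m"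
  have \<rho>: "\<rho> \<in> carrier_mat N N"
    using frac[of "1 / 2"] by (simp add: K_cone_def mat_closure_def N_def)
  define T where "T = (\<Sum>x<N. cmod (\<rho> $$ (x,x))) + real N"
  have T: "0 \<le> T"
    unfolding T_def by (intro add_nonneg_nonneg sum_nonneg) auto
  have "\<exists>\<sigma>\<in>cone_gen n m (real k). \<forall>x<N. \<forall>y<N. cmod (\<rho> $$ (x,y) - \<sigma> $$ (x,y)) < \<epsilon>"
    if \<epsilon>: "0 < \<epsilon>" for \<epsilon>
  proof -
    define \<theta> where "\<theta> = min (1 / 2) (\<epsilon> / (8 * (T + 1)))"
    have \<theta>: "0 < \<theta>" "\<theta> < 1" "\<theta> \<le> \<epsilon> / (8 * (T + 1))"
      unfolding \<theta>_def using \<epsilon> T by auto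
    have "8 * \<theta> * (T + 1) \<le> \<epsilon>"
      using \<theta>(3) T by (simp add: field_simps)
    then have \<theta>T: "4 * \<theta> * T < \<epsilon> / 2"
      using \<theta>(1) by (simp add: algebra_simps)
    have "0 < min (\<epsilon> / 2) 1"
      using \<epsilon> by simp
    then obtain \<sigma>' where \<sigma>': "\<sigma>' \<in> cone_gen n m (real k + \<theta>)"
      and close: "\<And>x y. x < N \<Longrightarrow> y < N \<Longrightarrow> cmod (\<rho> $$ (x,y) - \<sigma>' $$ (x,y)) < min (\<epsilon> / 2) 1"
      using frac[OF \<theta>(1,2)] unfolding K_cone_def mat_closure_def N_def by blast
    have trace: "Re (\<Sum>x<N. \<sigma>' $$ (x,x)) \<le> T"
      unfolding T_def using close by (intro Re_trace_le_of_close) simp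
    obtain \<sigma> where \<sigma>: "\<sigma> \<in> cone_gen n m (real k)"
      and trunc: "\<And>x y. x < N \<Longrightarrow> y < N \<Longrightarrow> cmod (\<sigma>' $$ (x,y) - \<sigma> $$ (x,y)) \<le> 4 * \<theta> * Re (\<Sum>x<N. \<sigma>' $$ (x,x))"
      using cone_gen_truncation[OF k \<theta>(1,2) \<sigma>'] unfolding N_def by blast
    have "cmod (\<rho> $$ (x,y) - \<sigma> $$ (x,y)) < \<epsilon>" if xy: "x < N" "y < N" for x y
    proof -
      have "cmod (\<rho> $$ (x,y) - \<sigma> $$ (x,y)) \<le> cmod (\<rho> $$ (x,y) - \<sigma>' $$ (x,y)) + cmod (\<sigma>' $$ (x,y) - \<sigma> $$ (x,y))"
        using norm_triangle_ineq[of "\<rho> $$ (x,y) - \<sigma>' $$ (x,y)" "\<sigma>' $$ (x,y) - \<sigma> $$ (x,y)"] by simp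
      also have "\<dots> < \<epsilon> / 2 + 4 * \<theta> * T"
      proof (rule add_less_le_mono)
        show "cmod (\<rho> $$ (x,y) - \<sigma>' $$ (x,y)) < \<epsilon> / 2"
          using close[OF xy] by simp
        have "4 * \<theta> * Re (\<Sum>x<N. \<sigma>' $$ (x,x)) \<le> 4 * \<theta> * T"
          using trace \<theta>(1) by (intro mult_left_mono) auto
        then show "cmod (\<sigma>' $$ (x,y) - \<sigma> $$ (x,y)) \<le> 4 * \<theta> * T"
          using trunc[OF xy] by linarith
      qed
      finally show ?thesis
        using \<theta>T by simp
    qed
    with \<sigma> show ?thesis
      by blast
  qed
  then show ?thesis
    using \<rho> unfolding K_cone_def mat_closure_def N_def by blast
qed

section \<open>Positivity of maps at integer ranks\<close>

lemma nonneg_real_quadratic_limit: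
  fixes a b c :: complex
  assumes t0: "0 < t0"
    and nonneg: "\<And>t. 0 < t \<Longrightarrow> t < t0 \<Longrightarrow> nonneg_real (a + complex_of_real t * b + complex_of_real (t\<^sup>2) * c)"
  shows "nonneg_real a"
proof -
  have "{z. nonneg_real z} = {z. Im z = 0} \<inter> {z. 0 \<le> Re z}"
    by (auto simp: nonneg_real_def)
  then have "closed {z. nonneg_real z}"
    by (auto intro!: closed_Int closed_Collect_eq closed_Collect_le continuous_intros)
  moreover have "\<forall>\<^sub>F t in at_right 0. a + complex_of_real t * b + complex_of_real (t\<^sup>2) * c \<in> {z. nonneg_real z}"
    unfolding eventually_at_right_field using t0 nonneg by auto
  moreover have "((\<lambda>t. a + complex_of_real t * b + complex_of_real (t\<^sup>2) * c) \<longlongrightarrow> a) (at_right (0::real))"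
    by (auto intro!: tendsto_eq_intros)
  ultimately have "a \<in> {z. nonneg_real z}"
    by (intro Lim_in_closed_set) auto
  then show ?thesis
    by simp
qed

lemma qform_smult: "qform C (complex_of_real a \<cdot>\<^sub>v v) = complex_of_real (a\<^sup>2) * qform C v"
  unfolding qform_def by (simp add: sum_distrib_left algebra_simps power2_eq_square)

lemma qform_add_smult:
  assumes "dim_vec w = dim_vec v"
  shows "qform C (v + complex_of_real t \<cdot>\<^sub>v w) = qform C v + complex_of_real t *
     (\<Sum>x<dim_vec v. \<Sum>y<dim_vec v. cnj (v $ x) * C $$ (x,y) * w $ y + cnj (w $ x) * C $$ (x,y) * v $ y)
     + complex_of_real (t\<^sup>2) * qform C w"
  unfolding qform_def using assms
  by (simp add: sum_distrib_left algebra_simps power2_eq_square sum.distrib)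

lemma admissible_of_boosted_reweight:
  assumes k: "2 \<le> k" "k \<le> min n m" and \<psi>: "\<psi> \<in> admissible n m (real k)"
    and gd: "gram_decomp n m (coeff_mat n m \<psi>) U e" and t: "0 < t"
    and c: "\<And>i. i < k - 1 \<Longrightarrow> c i = 1 + t" "\<And>i. k - 1 \<le> i \<Longrightarrow> c i = 1"
  shows "complex_of_real (1 / sqrt (\<Sum>i<n. (c i)\<^sup>2 * e i)) \<cdot>\<^sub>v reweight n m U \<psi> c
    \<in> admissible n m (real (k - 1) + 1 / (1 + t))"
proof -
  define N where "N = sqrt (\<Sum>i<n. (c i)\<^sup>2 * e i)"
  define \<phi> where "\<phi> = complex_of_real (1 / N) \<cdot>\<^sub>v reweight n m U \<psi> c"
  have unit: "unit_vec (n * m) \<psi>" and zero: "\<And>j. k + 1 \<le> j \<Longrightarrow> j \<le> min n m \<Longrightarrow> schmidt n m \<psi> j = 0"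
    using \<psi> unfolding admissible_nat_iff by auto
  have e: "\<And>i. i < n \<Longrightarrow> 0 \<le> e i" "\<And>i j. i \<le> j \<Longrightarrow> j < n \<Longrightarrow> e j \<le> e i"
    using gd by (auto simp: gram_decomp_def)
  have c_ge: "1 \<le> c i" for i
    using c t by (cases "i < k - 1") auto
  have c_mono: "c j \<le> c i" if "i \<le> j" for i j
    using c that t by (cases "j < k - 1"; cases "i < k - 1") auto
  have schmidt_\<psi>: "schmidt n m \<psi> j = sqrt (e (j - 1))" if "1 \<le> j" "j \<le> n" for j
    using schmidt_gram_decomp[OF gd that] .
  have "1 = (\<Sum>i<n. e i)"
    using sum_gram_decomp_unit[OF gd unit] by simp
  also have "\<dots> \<le> (\<Sum>i<n. (c i)\<^sup>2 * e i)"
  proof (rule sum_mono)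
    fix i assume "i \<in> {..<n}"
    moreover have "1 \<le> (c i)\<^sup>2"
      using c_ge[of i] by (simp add: one_le_power)
    ultimately show "e i \<le> (c i)\<^sup>2 * e i"
      using mult_right_mono[of 1 "(c i)\<^sup>2" "e i"] e(1) by simp
  qed
  finally have N: "1 \<le> N"
    unfolding N_def by simp
  have c_nonneg: "0 \<le> c i" for i
    using c_ge[of i] by simp
  have "0 < N"
    using N by simp
  have schmidt_\<phi>: "schmidt n m \<phi> j = 1 / N * c (j - 1) * sqrt (e (j - 1))" if "1 \<le> j" "j \<le> n" for j
  proof -
    have "schmidt n m \<phi> j = c (j - 1) / N * sqrt (e (j - 1))"
      unfolding \<phi>_def by (rule normalized_reweight(2)[OF gd c_nonneg _ N_def \<open>0 < N\<close> that]) (rule c_mono)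
    then show ?thesis
      by simp
  qed
  have "unit_vec (n * m) \<phi>"
    unfolding \<phi>_def by (rule normalized_reweight(1)[OF gd c_nonneg _ N_def \<open>0 < N\<close>]) (rule c_mono)
  moreover have "schmidt n m \<phi> j = 0" if "k - 1 + 2 \<le> j" "j \<le> min n m" for j
    using zero[of j] schmidt_\<phi>[of j] schmidt_\<psi>[of j] k that by simp
  moreover have "schmidt n m \<phi> (k - 1 + 1) \<le> 1 / (1 + t) / real (k - 1) * (\<Sum>j = 1..k - 1. schmidt n m \<phi> j)"
  proof -
    define S where "S = (\<Sum>j = 1..k - 1. sqrt (e (j - 1)))"
    have "real (k - 1) * sqrt (e (k - 1)) = (\<Sum>j = 1..k - 1. sqrt (e (k - 1)))"
      by simp
    also have "\<dots> \<le> S"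
      unfolding S_def using k e(2) by (intro sum_mono) auto
    finally have "sqrt (e (k - 1)) \<le> S / real (k - 1)"
      using k by (simp add: field_simps)
    moreover have "(\<Sum>j = 1..k - 1. schmidt n m \<phi> j) = (1 + t) / N * S"
      unfolding S_def sum_distrib_left using k by (intro sum.cong refl) (auto simp: schmidt_\<phi> c)
    moreover have "schmidt n m \<phi> (k - 1 + 1) = 1 / N * sqrt (e (k - 1))"
      using k schmidt_\<phi>[of k] c(2)[of "k - 1"] by simp
    moreover have "sqrt (e (k - 1)) / N \<le> S / real (k - 1) / N"
      using divide_right_mono[OF \<open>sqrt (e (k - 1)) \<le> S / real (k - 1)\<close>, of N] N by simp
    ultimately show ?thesis
      using N t by simp
  qed
  moreover have "0 < 1 / (1 + t)" "1 / (1 + t) < 1"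
    using t by simp_all
  ultimately have "\<phi> \<in> admissible n m (real (k - 1) + 1 / (1 + t))"
    unfolding admissible_frac_iff[OF \<open>0 < 1 / (1 + t)\<close> \<open>1 / (1 + t) < 1\<close>] by (simp add: numeral_2_eq_2)
  then show ?thesis
    by (simp add: \<phi>_def N_def)
qed

lemma qform_nonneg_nat_of_frac:
  assumes k: "2 \<le> k" "k \<le> min n m"
    and frac: "\<And>\<theta> \<phi>. 0 < \<theta> \<Longrightarrow> \<theta> < 1 \<Longrightarrow> \<phi> \<in> admissible n m (real (k - 1) + \<theta>) \<Longrightarrow>
      nonneg_real (qform C \<phi>)"
    and \<psi>: "\<psi> \<in> admissible n m (real k)"
  shows "nonneg_real (qform C \<psi>)"
proof -
  have \<psi>_carrier: "\<psi> \<in> carrier_vec (n * m)"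
    using \<psi> unfolding admissible_nat_iff unit_vec_def by simp
  obtain U e where gd: "gram_decomp n m (coeff_mat n m \<psi>) U e"
    using gram_decomp_exists[OF coeff_mat_carrier(1)] .
  have U: "unitary n U"
    using gd by (simp add: gram_decomp_def)
  define ind where "ind = (\<lambda>i::nat. if i < k - 1 then (1::real) else 0)"
  define \<chi> where "\<chi> = reweight n m U \<psi> ind"
  have boost: "nonneg_real (qform C (\<psi> + complex_of_real t \<cdot>\<^sub>v \<chi>))" if t: "0 < t" "t < 1" for t
  proof -
    define c where "c = (\<lambda>i. 1 * 1 + t * ind i)"
    have "reweight n m U \<psi> c = \<psi> + complex_of_real t \<cdot>\<^sub>v \<chi>"
      using reweight_lincomb[OF unitary_carrier[OF U], of m \<psi> 1 "\<lambda>_. 1" t ind] reweight_one[OF U \<psi>_carrier]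
      unfolding c_def \<chi>_def by simp
    moreover define N where "N = sqrt (\<Sum>i<n. (c i)\<^sup>2 * e i)"
    ultimately have adm: "complex_of_real (1 / N) \<cdot>\<^sub>v (\<psi> + complex_of_real t \<cdot>\<^sub>v \<chi>)
        \<in> admissible n m (real (k - 1) + 1 / (1 + t))"
      using admissible_of_boosted_reweight[OF k \<psi> gd t(1), of c] by (simp add: c_def ind_def)
    have "0 < 1 / (1 + t)" "1 / (1 + t) < 1"
      using t by simp_all
    from frac[OF this adm]
    have "nonneg_real (complex_of_real ((1 / N)\<^sup>2) * qform C (\<psi> + complex_of_real t \<cdot>\<^sub>v \<chi>))"
      by (simp only: qform_smult)
    moreover have "N \<noteq> 0"
    proof
      assume "N = 0"
      moreover have "unit_vec (n * m) (complex_of_real (1 / N) \<cdot>\<^sub>v (\<psi> + complex_of_real t \<cdot>\<^sub>v \<chi>))"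
        using adm unfolding admissible_def by blast
      ultimately show False
        by (simp add: unit_vec_iff_sqnorm sqnorm_smult)
    qed
    ultimately show ?thesis
      by (simp add: nonneg_real_def zero_le_mult_iff)
  qed
  have dim: "dim_vec \<chi> = dim_vec \<psi>"
    using \<psi>_carrier by (simp add: \<chi>_def)
  show ?thesis
    using nonneg_real_quadratic_limit[of 1, OF _ boost[unfolded qform_add_smult[OF dim]]] by simp
qed

section \<open>Fractional Schmidt number and the positivity threshold\<close>

lemma FSN_bounds:
  assumes "psd (n * m) \<rho>" "1 \<le> min n m"
  shows "1 \<le> FSN n m \<rho>" "FSN n m \<rho> \<le> real (min n m)"
proof -
  define S where "S = {\<alpha>. 1 \<le> \<alpha> \<and> \<alpha> \<le> real (min n m) \<and> \<rho> \<in> K_cone n m \<alpha>}"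
  have "real (min n m) \<in> S"
    unfolding S_def using psd_in_K_cone_min[OF assms(1)] assms(2) by auto
  moreover have "bdd_below S"
    unfolding S_def by (rule bdd_belowI[of _ 1]) auto
  ultimately show "1 \<le> FSN n m \<rho>" "FSN n m \<rho> \<le> real (min n m)"
    unfolding FSN_def S_def[symmetric] by (auto intro: cInf_greatest cInf_lower simp: S_def)
qed

lemma K_cone_iff_FSN_le:
  assumes psd: "psd (n * m) \<rho>" and l: "1 \<le> l" "l \<le> min n m"
  shows "\<rho> \<in> K_cone n m (real l) \<longleftrightarrow> FSN n m \<rho> \<le> real l"
proof -
  define S where "S = {\<alpha>. 1 \<le> \<alpha> \<and> \<alpha> \<le> real (min n m) \<and> \<rho> \<in> K_cone n m \<alpha>}"
  have FSN: "FSN n m \<rho> = Inf S"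
    unfolding FSN_def S_def ..
  have min: "real (min n m) \<in> S"
    unfolding S_def using psd_in_K_cone_min[OF psd] l by auto
  have bdd: "bdd_below S"
    unfolding S_def by (rule bdd_belowI[of _ 1]) auto
  show ?thesis
  proof
    assume "\<rho> \<in> K_cone n m (real l)"
    then have "real l \<in> S"
      unfolding S_def using l by auto
    then show "FSN n m \<rho> \<le> real l"
      unfolding FSN by (rule cInf_lower[OF _ bdd])
  next
    assume le: "FSN n m \<rho> \<le> real l"
    show "\<rho> \<in> K_cone n m (real l)"
    proof (cases "l = min n m")
      case True
      then show ?thesis
        using psd_in_K_cone_min[OF psd] by simp
    next
      case False
      then have "l < min n m"
        using l(2) by (rule le_neq_implies_less[rotated])
      then show ?thesis
      proof (rule K_cone_nat_of_frac[OF l(1)])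
        fix \<theta> :: real assume \<theta>: "0 < \<theta>" "\<theta> < 1"
        have "Inf S < real l + \<theta>"
          using le \<theta> unfolding FSN by simp
        then obtain \<alpha> where \<alpha>: "\<alpha> \<in> S" "\<alpha> < real l + \<theta>"
          using cInf_less_iff[OF _ bdd] min by blast
        have "K_cone n m \<alpha> \<subseteq> K_cone n m (real l + \<theta>)"
          using \<alpha> \<theta> \<open>l < min n m\<close> by (intro K_cone_mono) (auto simp: S_def)
        then show "\<rho> \<in> K_cone n m (real l + \<theta>)"
          using \<alpha> unfolding S_def by auto
      qed
    qed
  qed
qed

lemma Min_K_cone_eq_ceiling_FSN:
  assumes psd: "psd (n * m) \<rho>" and d: "1 \<le> min n m"
  shows "int (Min {l. 1 \<le> l \<and> l \<le> min n m \<and> \<rho> \<in> K_cone n m (real l)}) = \<lceil>FSN n m \<rho>\<rceil>"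
proof -
  define F where "F = FSN n m \<rho>"
  have F: "1 \<le> F" "F \<le> real (min n m)"
    using FSN_bounds[OF psd d] unfolding F_def by auto
  have L: "{l. 1 \<le> l \<and> l \<le> min n m \<and> \<rho> \<in> K_cone n m (real l)} = {l. 1 \<le> l \<and> l \<le> min n m \<and> F \<le> real l}"
    using K_cone_iff_FSN_le[OF psd] unfolding F_def by blast
  have "Min {l. 1 \<le> l \<and> l \<le> min n m \<and> F \<le> real l} = nat \<lceil>F\<rceil>"
  proof (rule Min_eqI)
    show "finite {l. 1 \<le> l \<and> l \<le> min n m \<and> F \<le> real l}"
      by (rule finite_subset[of _ "{..min n m}"]) auto
    show "nat \<lceil>F\<rceil> \<le> l" if "l \<in> {l. 1 \<le> l \<and> l \<le> min n m \<and> F \<le> real l}" for l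
      using that by (simp add: nat_le_iff ceiling_le_iff)
    show "nat \<lceil>F\<rceil> \<in> {l. 1 \<le> l \<and> l \<le> min n m \<and> F \<le> real l}"
      using F by (auto simp: nat_le_iff ceiling_le_iff) linarith+
  qed
  then show ?thesis
    unfolding L F_def[symmetric] using F by simp
qed

lemma P_set_iff_le_tau:
  assumes P1: "\<Phi> \<in> P_set n m 1" and k: "1 \<le> k" "k \<le> min n m"
  shows "\<Phi> \<in> P_set n m (real k) \<longleftrightarrow> real k \<le> tau n m \<Phi>"
proof -
  define S where "S = {\<alpha>. 1 \<le> \<alpha> \<and> \<alpha> \<le> real (min n m) \<and> \<Phi> \<in> P_set n m \<alpha>}"
  have tau: "tau n m \<Phi> = Sup S"
    unfolding tau_def S_def ..
  have one: "1 \<in> S"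
    unfolding S_def using P1 k by auto
  have bdd: "bdd_above S"
    unfolding S_def by (rule bdd_aboveI[of _ "real (min n m)"]) auto
  show ?thesis
  proof
    assume "\<Phi> \<in> P_set n m (real k)"
    then have "real k \<in> S"
      unfolding S_def using k by auto
    then show "real k \<le> tau n m \<Phi>"
      unfolding tau by (rule cSup_upper[OF _ bdd])
  next
    assume le: "real k \<le> tau n m \<Phi>"
    show "\<Phi> \<in> P_set n m (real k)"
    proof (cases "k = 1")
      case False
      then have k2: "2 \<le> k"
        using k by simp
      have "nonneg_real (qform (choi n m \<Phi>) \<psi>)" if \<psi>: "\<psi> \<in> admissible n m (real k)" for \<psi>
      proof (rule qform_nonneg_nat_of_frac[OF k2 k(2) _ \<psi>])
        fix \<theta> :: real and \<phi> assume \<theta>: "0 < \<theta>" "\<theta> < 1" and \<phi>: "\<phi> \<in> admissible n m (real (k - 1) + \<theta>)"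
        have "real (k - 1) + \<theta> < Sup S"
          using le \<theta> k2 unfolding tau by (simp add: of_nat_diff)
        then obtain \<alpha> where \<alpha>: "\<alpha> \<in> S" "real (k - 1) + \<theta> < \<alpha>"
          using less_cSup_iff[OF _ bdd] one by blast
        have "P_set n m \<alpha> \<subseteq> P_set n m (real (k - 1) + \<theta>)"
          using \<alpha> \<theta> k2 by (intro P_set_antimono) (auto simp: S_def)
        then show "nonneg_real (qform (choi n m \<Phi>) \<phi>)"
          using \<alpha> \<phi> unfolding S_def P_set_def by auto
      qed
      then show ?thesis
        using P1 unfolding P_set_def by auto
    qed (use P1 in simp)
  qed
qed

theorem proposition4p4:
  fixes n m k :: nat
  assumes "1 \<le> k" and "k \<le> min n m"
  shows "(\<forall>\<rho>. psd (n * m) \<rho> \<and> \<rho> \<noteq> 0\<^sub>m (n * m) (n * m) \<longrightarrow>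
            (\<rho> \<in> K_cone n m (real k) \<longleftrightarrow> FSN n m \<rho> \<le> real k) \<and>
            int (Min {l. 1 \<le> l \<and> l \<le> min n m \<and> \<rho> \<in> K_cone n m (real l)}) = \<lceil>FSN n m \<rho>\<rceil>)
       \<and> (\<forall>\<Phi>. \<Phi> \<in> P_set n m 1 \<longrightarrow> (\<Phi> \<in> P_set n m (real k) \<longleftrightarrow> real k \<le> tau n m \<Phi>))"
proof (intro conjI allI impI)
  fix \<rho> assume "psd (n * m) \<rho> \<and> \<rho> \<noteq> 0\<^sub>m (n * m) (n * m)"
  then have psd: "psd (n * m) \<rho>"
    by simp
  show "\<rho> \<in> K_cone n m (real k) \<longleftrightarrow> FSN n m \<rho> \<le> real k"
    using K_cone_iff_FSN_le[OF psd assms] .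
  show "int (Min {l. 1 \<le> l \<and> l \<le> min n m \<and> \<rho> \<in> K_cone n m (real l)}) = \<lceil>FSN n m \<rho>\<rceil>"
    using Min_K_cone_eq_ceiling_FSN[OF psd] assms by simp
next
  fix \<Phi> assume "\<Phi> \<in> P_set n m 1"
  then show "\<Phi> \<in> P_set n m (real k) \<longleftrightarrow> real k \<le> tau n m \<Phi>"
    using P_set_iff_le_tau assms by blast
qed

end
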